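(* Composition of planar orders is associative: if $(G_1,\prec_1),(G_2,\prec_2),(G_3,\prec_3)$ are POP-graphs such that the number of output edges of $G_1$ equals the number of input edges of $G_2$ and the number of output edges of $G_2$ equals the number of input edges of $G_3$, then under the natural identification $(G_3\circ G_2)\circ G_1=G_3\circ(G_2\circ G_1)$ one has $(\prec_3\circ\prec_2)\circ\prec_1=\prec_3\circ(\prec_2\circ\prec_1)$.
   Context: A progressive graph is a finite directed acyclic graph (parallel edges allowed) in which every source and every sink has degree one; degree-one vertices are boundary vertices. An input edge is an edge whose initial vertex is a boundary vertex; an output edge one whose terminal vertex is a boundary vertex. For edges write $e\to e'$ if $e\neq e'$ and there is a directed path whose first edge is $e$ and last edge is $e'$. A planar order on $G$ is a linear order $\prec$ on $E(G)$ such that (P1) $e_1\to e_2$ implies $e_1\prec e_2$; (P2) if $e_1\prec e_2\prec e_3$ and $e_1\to e_3$ then $e_1\to e_2$ or $e_2\to e_3$. A POP-graph is a progressive graph with a planar order. Composition: let $(G_1,\prec_1)$, $(G_2,\prec_2)$ be POP-graphs, $G_1$ with output edges $o_1\prec_1\cdots\prec_1 o_n$ and $G_2$ with input edges $i_1\prec_2\cdots\prec_2 i_n$. The progressive graph $G_2\circ G_1$ is obtained from $G_1\sqcup G_2$ by deleting the sinks of $G_1$, the sources of $G_2$ and the edges $o_k,i_k$, and adding for each $k$ a new edge $\overline{e_k}$ from the initial vertex of $o_k$ to the terminal vertex of $i_k$. Let $Q_1=\{e\in E(G_1): e\prec_1 o_1\}$, $Q_k=\{e: o_{k-1}\prec_1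 e\prec_1 o_k\}$ ($2\le k\le n$), $P_k=\{e\in E(G_2): i_k\prec_2 e\prec_2 i_{k+1}\}$ ($1\le k\le n-1$), $P_n=\{e: i_n\prec_2 e\}$. The composition $\prec_2\circ\prec_1$ is the linear order on $E(G_2\circ G_1)$ listing $Q_1,\{\overline{e_1}\},P_1,Q_2,\{\overline{e_2}\},P_2,\dots,Q_n,\{\overline{e_n}\},P_n$ consecutively, each $Q_k$ ordered by $\prec_1$ and each $P_k$ by $\prec_2$. *)

theory Defs
  imports Main
begin

text \<open>Edges carry names of type 'a set:
  the edge obtained by gluing an output edge o and an input edge i in a composition is
  named o \<union> i. With pairwise disjoint names this realises the disjoint union and makes
  the natural identification of (G3 o G2) o G1 with G3 o (G2 o G1) a literal equality.\<close>

record ('v, 'e) pgraph =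
  verts :: "'v set"
  edges :: "'e set"
  src :: "'e \<Rightarrow> 'v"
  tgt :: "'e \<Rightarrow> 'v"

definition indeg :: "('v, 'e) pgraph \<Rightarrow> 'v \<Rightarrow> nat" where
  "indeg G v = card {e \<in> edges G. tgt G e = v}"

definition outdeg :: "('v, 'e) pgraph \<Rightarrow> 'v \<Rightarrow> nat" where
  "outdeg G v = card {e \<in> edges G. src G e = v}"

definition deg :: "('v, 'e) pgraph \<Rightarrow> 'v \<Rightarrow> nat" where
  "deg G v = indeg G v + outdeg G v"

definition sources :: "('v, 'e) pgraph \<Rightarrow> 'v set" where
  "sources G = {v \<in> verts G. indeg G v = 0}"

definition sinks :: "('v, 'e) pgraph \<Rightarrow> 'v set" where
  "sinks G = {v \<in> verts G. outdeg G v = 0}"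

definition boundary :: "('v, 'e) pgraph \<Rightarrow> 'v set" where
  "boundary G = {v \<in> verts G. deg G v = 1}"

definition estep :: "('v, 'e) pgraph \<Rightarrow> ('e \<times> 'e) set" where
  "estep G = {(e, e'). e \<in> edges G \<and> e' \<in> edges G \<and> tgt G e = src G e'}"

definition reach :: "('v, 'e) pgraph \<Rightarrow> 'e \<Rightarrow> 'e \<Rightarrow> bool" where
  "reach G e e' \<longleftrightarrow> e \<noteq> e' \<and> (e, e') \<in> (estep G)\<^sup>+"

definition progressive :: "('v, 'e) pgraph \<Rightarrow> bool" where
  "progressive G \<longleftrightarrow>
     finite (verts G) \<and> finite (edges G) \<and>
     (\<forall>e \<in> edges G. src G e \<in> verts G \<and> tgt G e \<in> verts G) \<and>
     (\<forall>e \<in> edges G. (e, e) \<notin> (estep G)\<^sup>+) \<and>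
     (\<forall>v \<in> sources G. deg G v = 1) \<and>
     (\<forall>v \<in> sinks G. deg G v = 1)"

definition inputs :: "('v, 'e) pgraph \<Rightarrow> 'e set" where
  "inputs G = {e \<in> edges G. src G e \<in> boundary G}"

definition outputs :: "('v, 'e) pgraph \<Rightarrow> 'e set" where
  "outputs G = {e \<in> edges G. tgt G e \<in> boundary G}"

definition planar_order :: "('v, 'e) pgraph \<Rightarrow> ('e \<times> 'e) set \<Rightarrow> bool" where
  "planar_order G R \<longleftrightarrow>
     R \<subseteq> edges G \<times> edges G \<and> strict_linear_order_on (edges G) R \<and>
     (\<forall>e1 e2. reach G e1 e2 \<longrightarrow> (e1, e2) \<in> R) \<and>
     (\<forall>e1 e2 e3. (e1, e2) \<in> R \<and> (e2, e3) \<in> R \<and> reach G e1 e3 \<longrightarrow>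
                  reach G e1 e2 \<or> reach G e2 e3)"

definition pop :: "('v, 'e) pgraph \<Rightarrow> ('e \<times> 'e) set \<Rightarrow> bool" where
  "pop G R \<longleftrightarrow> progressive G \<and> planar_order G R"

text \<open>number of elements of S strictly before x w.r.t. R; and the k-th element (0-based)\<close>
definition rnk :: "('e \<times> 'e) set \<Rightarrow> 'e set \<Rightarrow> 'e \<Rightarrow> nat" where
  "rnk R S x = card {y \<in> S. (y, x) \<in> R}"

definition nth_in :: "('e \<times> 'e) set \<Rightarrow> 'e set \<Rightarrow> nat \<Rightarrow> 'e" where
  "nth_in R S k = (THE x. x \<in> S \<and> rnk R S x = k)"

text \<open>Composition G2 o G1. The k-th (0-based) glued edge joins the k-th output o_k of G1
  with the k-th input i_k of G2.\<close>
definition glue :: "('v, 'a set) pgraph \<Rightarrow> ('a set \<times> 'a set) set \<Rightarrow>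
                    ('v, 'a set) pgraph \<Rightarrow> ('a set \<times> 'a set) set \<Rightarrow> nat \<Rightarrow> 'a set" where
  "glue G2 R2 G1 R1 k = nth_in R1 (outputs G1) k \<union> nth_in R2 (inputs G2) k"

definition glue_idx :: "('v, 'a set) pgraph \<Rightarrow> ('a set \<times> 'a set) set \<Rightarrow>
                    ('v, 'a set) pgraph \<Rightarrow> ('a set \<times> 'a set) set \<Rightarrow> 'a set \<Rightarrow> nat" where
  "glue_idx G2 R2 G1 R1 x = (THE k. k < card (outputs G1) \<and> x = glue G2 R2 G1 R1 k)"

definition comp_graph :: "('v, 'a set) pgraph \<Rightarrow> ('a set \<times> 'a set) set \<Rightarrow>
                    ('v, 'a set) pgraph \<Rightarrow> ('a set \<times> 'a set) set \<Rightarrow> ('v, 'a set) pgraph" where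
  "comp_graph G2 R2 G1 R1 =
    \<lparr> verts = (verts G1 - sinks G1) \<union> (verts G2 - sources G2),
      edges = (edges G1 - outputs G1) \<union> (edges G2 - inputs G2)
              \<union> glue G2 R2 G1 R1 ` {..<card (outputs G1)},
      src = (\<lambda>x. if x \<in> edges G1 - outputs G1 then src G1 x
                 else if x \<in> edges G2 - inputs G2 then src G2 x
                 else src G1 (nth_in R1 (outputs G1) (glue_idx G2 R2 G1 R1 x))),
      tgt = (\<lambda>x. if x \<in> edges G1 - outputs G1 then tgt G1 x
                 else if x \<in> edges G2 - inputs G2 then tgt G2 x
                 else tgt G2 (nth_in R2 (inputs G2) (glue_idx G2 R2 G1 R1 x))) \<rparr>"

text \<open>Block numbers realising the listing Q_1, {e_1}, P_1, Q_2, ..., Q_n, {e_n}, P_n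
  (with 1-based k: Q_k has block 3k, the glued edge e_k block 3k+1, P_k block 3k+2).\<close>
definition comp_block :: "('v, 'a set) pgraph \<Rightarrow> ('a set \<times> 'a set) set \<Rightarrow>
                    ('v, 'a set) pgraph \<Rightarrow> ('a set \<times> 'a set) set \<Rightarrow> 'a set \<Rightarrow> nat" where
  "comp_block G2 R2 G1 R1 x =
    (if x \<in> edges G1 - outputs G1 then 3 * (rnk R1 (outputs G1) x + 1)
     else if x \<in> edges G2 - inputs G2 then 3 * rnk R2 (inputs G2) x + 2
     else 3 * (glue_idx G2 R2 G1 R1 x + 1) + 1)"

definition comp_order :: "('v, 'a set) pgraph \<Rightarrow> ('a set \<times> 'a set) set \<Rightarrow>
                    ('v, 'a set) pgraph \<Rightarrow> ('a set \<times> 'a set) set \<Rightarrow> ('a set \<times> 'a set) set" where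
  "comp_order G2 R2 G1 R1 =
    (let E = edges (comp_graph G2 R2 G1 R1); b = comp_block G2 R2 G1 R1 in
     {(x, y). x \<in> E \<and> y \<in> E \<and>
        (b x < b y \<or>
         (b x = b y \<and>
            ((x \<in> edges G1 - outputs G1 \<and> y \<in> edges G1 - outputs G1 \<and> (x, y) \<in> R1) \<or>
             (x \<in> edges G2 - inputs G2 \<and> y \<in> edges G2 - inputs G2 \<and> (x, y) \<in> R2))))})"

definition disjoint_names :: "('v, 'a set) pgraph \<Rightarrow> bool" where
  "disjoint_names G \<longleftrightarrow> (\<forall>e \<in> edges G. e \<noteq> {}) \<and>
     (\<forall>e \<in> edges G. \<forall>e' \<in> edges G. e \<noteq> e' \<longrightarrow> e \<inter> e' = {})"

end

theory Submission
  imports Defs "HOL-Library.Product_Lexorder" "HOL-Library.Option_ord"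
begin

(* A strict linear order on a finite set amounts to an injective key into a linear order, for
   instance the rank.  The listing Q_1, e_1, P_1, ..., Q_n, e_n, P_n that orders S o F can be
   keyed in two ways: by anchoring every edge at an output of F (the edges of P_k follow o_k),
   or at an input of S (the edges of Q_k precede i_k).  The anchors exist in POP-graphs, since
   by (P1) every non-input edge lies after some input and every non-output edge before some
   output.  Keying (G3 o G2) o G1 through the inputs of its second factor and G3 o (G2 o G1)
   through the outputs of its first factor anchors both orders in G2: every edge of the triple
   composite gets a common key (P, t, z), of which the two keys are order-preserving images.
   As a glued edge is named by the union of the names it glues, the two composite graphs are
   literally equal. *)

section \<open>Strict linear orders given by keys\<close>

lemma less_triple_iff:
  fixes a a' :: "'a::linorder" and t t' :: "'b::linorder" and c c' :: "'c::linorder"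
  shows "(a, t, c) < (a', t', c') \<longleftrightarrow> a < a' \<or> a = a' \<and> (t < t' \<or> t = t' \<and> c < c')"
  by (simp add: less_prod_def')

definition keyed_order :: "('e \<times> 'e) set \<Rightarrow> 'e set \<Rightarrow> ('e \<Rightarrow> 'k::linorder) \<Rightarrow> bool" where
  "keyed_order R E f \<longleftrightarrow> R = {(x, y). x \<in> E \<and> y \<in> E \<and> f x < f y} \<and> inj_on f E"

lemma keyed_orderD:
  assumes "keyed_order R E f"
  shows keyed_order_iff: "(x, y) \<in> R \<longleftrightarrow> x \<in> E \<and> y \<in> E \<and> f x < f y"
    and keyed_order_key_eq_iff: "x \<in> E \<Longrightarrow> y \<in> E \<Longrightarrow> f x = f y \<longleftrightarrow> x = y"
  using assms unfolding keyed_order_def inj_on_def by auto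

lemma keyed_orderI:
  assumes "\<And>x y. x \<in> E \<Longrightarrow> y \<in> E \<Longrightarrow> (x, y) \<in> R \<longleftrightarrow> f x < f y"
    and "R \<subseteq> E \<times> E" and "inj_on f E"
  shows "keyed_order R E f"
  using assms unfolding keyed_order_def by blast

lemma keyed_order_eqI:
  assumes "keyed_order R E f" "keyed_order R' E f'"
    and "\<And>x y. x \<in> E \<Longrightarrow> y \<in> E \<Longrightarrow> f x < f y \<longleftrightarrow> f' x < f' y"
  shows "R = R'"
  using assms unfolding keyed_order_def by auto

lemma rnk_le_card: "finite T \<Longrightarrow> rnk R T x \<le> card T"
  unfolding rnk_def by (rule card_mono) auto

lemma keyed_order_rnk:
  assumes "finite E" "R \<subseteq> E \<times> E" "strict_linear_order_on E R"
  shows "keyed_order R E (rnk R E)"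
proof -
  have trans: "trans R" and irrefl: "irrefl R" and total: "total_on E R"
    using assms(3) by (auto simp: strict_linear_order_on_def)
  have less: "rnk R E x < rnk R E y" if "(x, y) \<in> R" for x y
  proof -
    have "{z \<in> E. (z, x) \<in> R} \<subset> {z \<in> E. (z, y) \<in> R}"
      using that transD[OF trans _ that] irrefl assms(2) by (auto simp: irrefl_def)
    then show ?thesis unfolding rnk_def using assms(1) by (simp add: psubset_card_mono)
  qed
  have R_or_R: "(x, y) \<in> R \<or> (y, x) \<in> R" if "x \<in> E" "y \<in> E" "x \<noteq> y" for x y
    using total that unfolding total_on_def by blast
  show ?thesis
  proof (rule keyed_orderI)
    fix x y assume "x \<in> E" "y \<in> E"
    then show "(x, y) \<in> R \<longleftrightarrow> rnk R E x < rnk R E y"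
      using less[of x y] less[of y x] R_or_R[of x y] by fastforce
  next
    show "inj_on (rnk R E) E"
      by (rule inj_onI) (use less R_or_R in fastforce)
  qed (fact assms(2))
qed

locale ranked_subset =
  fixes R :: "('e \<times> 'e) set" and E :: "'e set" and f :: "'e \<Rightarrow> 'k::linorder" and T :: "'e set"
  assumes keyed: "keyed_order R E f" and subset: "T \<subseteq> E" and finite: "finite T"
begin

abbreviation "rank \<equiv> rnk R T"
abbreviation "elem \<equiv> nth_in R T"

lemma rank_eq_card: "x \<in> E \<Longrightarrow> rank x = card {y \<in> T. f y < f x}"
  unfolding rnk_def using keyed_order_iff[OF keyed] subset by (metis (lifting) subsetD)

lemma rank_mono: "x \<in> E \<Longrightarrow> y \<in> E \<Longrightarrow> f x \<le> f y \<Longrightarrow> rank x \<le> rank y"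
  by (simp add: rank_eq_card finite card_mono) (auto intro!: card_mono finite)

lemma rank_less_iff: "t \<in> T \<Longrightarrow> x \<in> E \<Longrightarrow> rank t < rank x \<longleftrightarrow> f t < f x"
proof
  assume "t \<in> T" "x \<in> E" "f t < f x"
  then have "{y \<in> T. f y < f t} \<subset> {y \<in> T. f y < f x}" by auto
  then show "rank t < rank x"
    using \<open>t \<in> T\<close> \<open>x \<in> E\<close> subset by (simp add: rank_eq_card finite psubset_card_mono subsetD)
next
  assume "t \<in> T" "x \<in> E" "rank t < rank x"
  then show "f t < f x" using rank_mono[of x t] subset by force
qed

lemma rank_less_card: "x \<in> T \<Longrightarrow> rank x < card T"
proof -
  assume "x \<in> T"
  then have "{y \<in> T. f y < f x} \<subset> T" by auto
  then show ?thesis using \<open>x \<in> T\<close> subset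
    by (simp add: rank_eq_card finite psubset_card_mono subsetD)
qed

lemma inj_on_rank: "inj_on rank T"
proof (rule inj_onI)
  fix x y assume "x \<in> T" "y \<in> T" "rank x = rank y"
  then show "x = y"
    using rank_less_iff[of x y] rank_less_iff[of y x] keyed_order_key_eq_iff[OF keyed, of x y] subset
    by (metis less_irrefl linorder_neqE subsetD)
qed

lemma bij_betw_rank: "bij_betw rank T {..<card T}"
proof -
  have "rank ` T \<subseteq> {..<card T}" using rank_less_card by auto
  then have "rank ` T = {..<card T}"
    using card_image[OF inj_on_rank] by (simp add: card_subset_eq)
  then show ?thesis using inj_on_rank by (simp add: bij_betw_def)
qed

lemma elem_rank: "x \<in> T \<Longrightarrow> elem (rank x) = x"
  unfolding nth_in_def using inj_on_rank by (auto intro: the_equality dest: inj_onD)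

lemma elem_mem_rank_elem:
  assumes "k < card T" shows elem_mem: "elem k \<in> T" and rank_elem: "rank (elem k) = k"
proof -
  obtain x where "x \<in> T" "rank x = k"
    using assms bij_betw_imp_surj_on[OF bij_betw_rank] by (metis imageE lessThan_iff)
  then show "elem k \<in> T" "rank (elem k) = k" using elem_rank by auto
qed

lemma elem_in_E: "k < card T \<Longrightarrow> elem k \<in> E"
  using elem_mem subset by blast

lemma elem_eq_iff: "a < card T \<Longrightarrow> b < card T \<Longrightarrow> elem a = elem b \<longleftrightarrow> a = b"
  using elem_mem_rank_elem by metis

lemma key_elem_less_iff: "a < card T \<Longrightarrow> b < card T \<Longrightarrow> f (elem a) < f (elem b) \<longleftrightarrow> a < b"
  using rank_less_iff elem_mem_rank_elem elem_in_E by metis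

lemma key_elem_eq_iff: "a < card T \<Longrightarrow> b < card T \<Longrightarrow> f (elem a) = f (elem b) \<longleftrightarrow> a = b"
  using keyed_order_key_eq_iff[OF keyed] elem_in_E elem_eq_iff by metis

lemma key_elem_neq: "x \<in> E - T \<Longrightarrow> a < card T \<Longrightarrow> f (elem a) \<noteq> f x"
  using keyed_order_key_eq_iff[OF keyed] elem_in_E elem_mem by fastforce

lemma key_elem_less_iff_rank: "x \<in> E \<Longrightarrow> a < card T \<Longrightarrow> f (elem a) < f x \<longleftrightarrow> a < rank x"
  using rank_less_iff elem_mem_rank_elem by metis

lemma key_less_elem_iff_rank:
  "x \<in> E - T \<Longrightarrow> a < card T \<Longrightarrow> f x < f (elem a) \<longleftrightarrow> rank x \<le> a"
  using key_elem_less_iff_rank[of x a] key_elem_neq[of x a] by auto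

lemma rank_order_lex:
  "x \<in> E \<Longrightarrow> y \<in> E \<Longrightarrow> f x < f y \<longleftrightarrow> rank x < rank y \<or> rank x = rank y \<and> f x < f y"
  using rank_mono[of y x] rank_mono[of x y] by force

end

section \<open>Progressive graphs\<close>

lemma finite_acyclic_reaches_maximal:
  assumes "finite r" "acyclic r"
  obtains m where "(a, m) \<in> r\<^sup>*" "\<And>y. (m, y) \<notin> r"
proof -
  have "wf (r\<inverse>)" using finite_acyclic_wf_converse[OF assms] .
  then obtain m where m: "m \<in> {b. (a, b) \<in> r\<^sup>*}"
    and min: "\<And>y. (y, m) \<in> r\<inverse> \<Longrightarrow> y \<notin> {b. (a, b) \<in> r\<^sup>*}"
    by (rule wfE_min[of _ a "{b. (a, b) \<in> r\<^sup>*}"]) auto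
  have "(m, y) \<notin> r" for y
    using m min[of y] by (auto intro: rtrancl_into_rtrancl)
  with m show ?thesis using that by blast
qed

lemma estep_subset: "estep G \<subseteq> edges G \<times> edges G"
  unfolding estep_def by auto

lemma progressiveD:
  assumes "progressive G"
  shows progressive_finite_edges: "finite (edges G)"
    and progressive_src_in_verts: "e \<in> edges G \<Longrightarrow> src G e \<in> verts G"
    and progressive_tgt_in_verts: "e \<in> edges G \<Longrightarrow> tgt G e \<in> verts G"
    and progressive_acyclic: "acyclic (estep G)"
    and progressive_source_deg: "v \<in> sources G \<Longrightarrow> deg G v = 1"
    and progressive_sink_deg: "v \<in> sinks G \<Longrightarrow> deg G v = 1"
proof -
  show "acyclic (estep G)"
    unfolding acyclic_def
  proof
    fix x show "(x, x) \<notin> (estep G)\<^sup>+"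
    proof
      assume cyc: "(x, x) \<in> (estep G)\<^sup>+"
      then obtain y where "(x, y) \<in> estep G" using tranclD by fast
      then have "x \<in> edges G" using estep_subset by blast
      then show False using cyc assms unfolding progressive_def by blast
    qed
  qed
qed (use assms in \<open>auto simp: progressive_def\<close>)

lemma indeg_eq_0_iff: "finite (edges G) \<Longrightarrow> indeg G v = 0 \<longleftrightarrow> (\<forall>e \<in> edges G. tgt G e \<noteq> v)"
  unfolding indeg_def by auto

lemma outdeg_eq_0_iff: "finite (edges G) \<Longrightarrow> outdeg G v = 0 \<longleftrightarrow> (\<forall>e \<in> edges G. src G e \<noteq> v)"
  unfolding outdeg_def by auto

lemma outdeg_tgt_output:
  assumes "progressive G" "e \<in> outputs G" shows "outdeg G (tgt G e) = 0"
  using assms indeg_eq_0_iff[OF progressive_finite_edges[OF assms(1)], of "tgt G e"]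
  unfolding outputs_def boundary_def deg_def by auto

lemma indeg_src_input:
  assumes "progressive G" "e \<in> inputs G" shows "indeg G (src G e) = 0"
  using assms outdeg_eq_0_iff[OF progressive_finite_edges[OF assms(1)], of "src G e"]
  unfolding inputs_def boundary_def deg_def by auto

lemma input_if_src_source:
  "progressive G \<Longrightarrow> e \<in> edges G \<Longrightarrow> src G e \<in> sources G \<Longrightarrow> e \<in> inputs G"
  using progressive_source_deg[of G "src G e"] unfolding inputs_def boundary_def sources_def by simp

lemma output_if_tgt_sink:
  "progressive G \<Longrightarrow> e \<in> edges G \<Longrightarrow> tgt G e \<in> sinks G \<Longrightarrow> e \<in> outputs G"
  using progressive_sink_deg[of G "tgt G e"] unfolding outputs_def boundary_def sinks_def by simp

lemma finite_estep: "progressive G \<Longrightarrow> finite (estep G)"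
  by (rule finite_subset[OF estep_subset]) (simp add: progressive_finite_edges)

lemma estep_trancl_edges: "(e, e') \<in> (estep G)\<^sup>+ \<Longrightarrow> e \<in> edges G \<and> e' \<in> edges G"
  by (induction rule: trancl.induct) (use estep_subset in auto)

lemma reach_output:
  assumes G: "progressive G" and e: "e \<in> edges G" "e \<notin> outputs G"
  obtains m where "m \<in> outputs G" "reach G e m"
proof -
  obtain m where em: "(e, m) \<in> (estep G)\<^sup>*" and last: "\<And>y. (m, y) \<notin> estep G"
    using finite_acyclic_reaches_maximal[OF finite_estep[OF G] progressive_acyclic[OF G]] by blast
  have m: "m \<in> edges G"
    using em e(1) by (cases "e = m") (auto simp: rtrancl_eq_or_trancl dest: estep_trancl_edges)
  have "\<forall>y \<in> edges G. src G y \<noteq> tgt G m"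
    using last m unfolding estep_def by (metis (lifting) case_prodI mem_Collect_eq)
  then have "tgt G m \<in> sinks G"
    using outdeg_eq_0_iff[OF progressive_finite_edges[OF G]] progressive_tgt_in_verts[OF G m]
    unfolding sinks_def by simp
  then have out: "m \<in> outputs G" by (rule output_if_tgt_sink[OF G m])
  then have "reach G e m"
    using em e(2) unfolding reach_def by (cases "e = m") (auto simp: rtrancl_eq_or_trancl)
  with out show ?thesis by (rule that)
qed

lemma reach_from_input:
  assumes G: "progressive G" and e: "e \<in> edges G" "e \<notin> inputs G"
  obtains m where "m \<in> inputs G" "reach G m e"
proof -
  have "finite ((estep G)\<inverse>)" "acyclic ((estep G)\<inverse>)"
    using finite_estep[OF G] progressive_acyclic[OF G] by (simp_all add: acyclic_converse)
  then obtain m where me: "(m, e) \<in> (estep G)\<^sup>*" and first: "\<And>y. (y, m) \<notin> estep G"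
    using finite_acyclic_reaches_maximal[where a = e] by (metis converseI rtrancl_converseD)
  have m: "m \<in> edges G"
    using me e(1) by (cases "e = m") (auto simp: rtrancl_eq_or_trancl dest: estep_trancl_edges)
  have "\<forall>y \<in> edges G. tgt G y \<noteq> src G m"
    using first m unfolding estep_def by (metis (lifting) case_prodI mem_Collect_eq)
  then have "src G m \<in> sources G"
    using indeg_eq_0_iff[OF progressive_finite_edges[OF G]] progressive_src_in_verts[OF G m]
    unfolding sources_def by simp
  then have inp: "m \<in> inputs G" by (rule input_if_src_source[OF G m])
  then have "reach G m e"
    using me e(2) unfolding reach_def by (cases "e = m") (auto simp: rtrancl_eq_or_trancl)
  with inp show ?thesis by (rule that)
qed

lemma popD:
  assumes "pop G R"
  shows pop_progressive: "progressive G"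
    and pop_keyed_order_rnk: "keyed_order R (edges G) (rnk R (edges G))"
    and pop_reach_less: "reach G e e' \<Longrightarrow> (e, e') \<in> R"
proof -
  show G: "progressive G" using assms unfolding pop_def by (elim conjE)
  have "planar_order G R" using assms unfolding pop_def by (elim conjE)
  then have "R \<subseteq> edges G \<times> edges G" "strict_linear_order_on (edges G) R"
    and "\<forall>e e'. reach G e e' \<longrightarrow> (e, e') \<in> R"
    unfolding planar_order_def by simp_all
  then show "keyed_order R (edges G) (rnk R (edges G))" "reach G e e' \<Longrightarrow> (e, e') \<in> R"
    using keyed_order_rnk[OF progressive_finite_edges[OF G]] by blast+
qed

lemma rnk_outputs_less_card:
  assumes G: "pop G R" and x: "x \<in> edges G - outputs G"
  shows "rnk R (outputs G) x < card (outputs G)"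
proof -
  obtain m where m: "m \<in> outputs G" "reach G x m"
    using reach_output[OF pop_progressive[OF G]] x by blast
  interpret ranked_subset R "edges G" "rnk R (edges G)" "outputs G"
    using pop_keyed_order_rnk[OF G] progressive_finite_edges[OF pop_progressive[OF G]]
    by unfold_locales (auto simp: outputs_def)
  have "(x, m) \<in> R" using pop_reach_less[OF G m(2)] .
  then have "rank x \<le> rank m"
    using rank_mono keyed_order_iff[OF keyed] by (simp add: less_imp_le)
  then show ?thesis using rank_less_card[OF m(1)] by linarith
qed

lemma rnk_inputs_pos:
  assumes G: "pop G R" and x: "x \<in> edges G - inputs G"
  shows "0 < rnk R (inputs G) x"
proof -
  obtain m where m: "m \<in> inputs G" "reach G m x"
    using reach_from_input[OF pop_progressive[OF G]] x by blast
  then have "m \<in> {y \<in> inputs G. (y, x) \<in> R}" using pop_reach_less[OF G] by blast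
  moreover have "finite (inputs G)"
    using progressive_finite_edges[OF pop_progressive[OF G]] unfolding inputs_def by simp
  ultimately show ?thesis unfolding rnk_def by (auto simp: card_gt_0_iff)
qed

section \<open>Composition\<close>

locale composition =
  fixes F :: "('v, 'a set) pgraph" and RF :: "('a set \<times> 'a set) set" and fF :: "'a set \<Rightarrow> 'k1::linorder"
    and S :: "('v, 'a set) pgraph" and RS :: "('a set \<times> 'a set) set" and fS :: "'a set \<Rightarrow> 'k2::linorder"
  assumes finite_F: "finite (edges F)" and finite_S: "finite (edges S)"
    and keyed_F: "keyed_order RF (edges F) fF" and keyed_S: "keyed_order RS (edges S) fS"
    and card_outputs_inputs: "card (outputs F) = card (inputs S)"
    and names_F: "disjoint_names F" and names_S: "disjoint_names S"
    and names_F_S: "\<Union>(edges F) \<inter> \<Union>(edges S) = {}"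
begin

sublocale out: ranked_subset RF "edges F" fF "outputs F"
  using keyed_F finite_F by unfold_locales (auto simp: outputs_def)

sublocale inp: ranked_subset RS "edges S" fS "inputs S"
  using keyed_S finite_S by unfold_locales (auto simp: inputs_def)

abbreviation "n \<equiv> card (outputs F)"
abbreviation "out_at \<equiv> nth_in RF (outputs F)"
abbreviation "in_at \<equiv> nth_in RS (inputs S)"
abbreviation "out_rank \<equiv> rnk RF (outputs F)"
abbreviation "in_rank \<equiv> rnk RS (inputs S)"
abbreviation "F_inner \<equiv> edges F - outputs F"
abbreviation "S_inner \<equiv> edges S - inputs S"
abbreviation "glued \<equiv> glue S RS F RF"
abbreviation "C \<equiv> comp_graph S RS F RF"
abbreviation "RC \<equiv> comp_order S RS F RF"

lemma card_inputs_S [simp]: "card (inputs S) = n"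
  using card_outputs_inputs by simp

lemma glued_eq: "glued k = out_at k \<union> in_at k"
  unfolding glue_def ..

lemma out_at_in_outputs: "k < n \<Longrightarrow> out_at k \<in> outputs F"
  and out_rank_out_at: "k < n \<Longrightarrow> out_rank (out_at k) = k"
  using out.elem_mem_rank_elem by blast+

lemma in_at_in_inputs: "k < n \<Longrightarrow> in_at k \<in> inputs S"
  and in_rank_in_at: "k < n \<Longrightarrow> in_rank (in_at k) = k"
  using inp.elem_mem_rank_elem by simp_all

lemma out_at_in_F: "k < n \<Longrightarrow> out_at k \<in> edges F"
  using out.elem_in_E by blast

lemma in_at_in_S: "k < n \<Longrightarrow> in_at k \<in> edges S"
  using inp.elem_in_E by simp

lemma out_at_out_rank: "e \<in> outputs F \<Longrightarrow> out_at (out_rank e) = e \<and> out_rank e < n"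
  using out.elem_rank out.rank_less_card by blast

lemma in_at_in_rank: "e \<in> inputs S \<Longrightarrow> in_at (in_rank e) = e \<and> in_rank e < n"
  using inp.elem_rank inp.rank_less_card by simp

lemma name_nonempty: "e \<in> edges F \<union> edges S \<Longrightarrow> e \<noteq> {}"
  using names_F names_S unfolding disjoint_names_def by (simp add: Ball_def) blast

lemma names_disjoint:
  assumes "e \<in> edges F \<union> edges S" "e' \<in> edges F \<union> edges S" "e \<noteq> e'"
  shows "e \<inter> e' = {}"
proof -
  have "\<forall>x\<in>edges F. \<forall>y\<in>edges F. x \<noteq> y \<longrightarrow> x \<inter> y = {}"
    and "\<forall>x\<in>edges S. \<forall>y\<in>edges S. x \<noteq> y \<longrightarrow> x \<inter> y = {}"
    using names_F names_S unfolding disjoint_names_def by simp_all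
  moreover have "x \<inter> y = {}" if "x \<in> edges F" "y \<in> edges S" for x y
    using names_F_S that by blast
  ultimately show ?thesis using assms by (metis Int_commute Un_iff)
qed

lemma edge_F_not_S: "e \<in> edges F \<Longrightarrow> e \<notin> edges S"
  using names_F_S name_nonempty by blast

lemma name_subset_eq:
  "x \<in> edges F \<union> edges S \<Longrightarrow> y \<in> edges F \<union> edges S \<Longrightarrow> x \<subseteq> y \<Longrightarrow> x = y"
  using names_disjoint[of x y] name_nonempty[of x] by blast

lemma glued_not_edge:
  assumes "k < n" shows "glued k \<notin> edges F \<union> edges S"
proof
  assume e: "glued k \<in> edges F \<union> edges S"
  have o: "out_at k \<in> edges F \<union> edges S" and i: "in_at k \<in> edges F \<union> edges S"
    using out_at_in_F in_at_in_S assms by blast+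
  have "out_at k \<subseteq> glued k" "in_at k \<subseteq> glued k"
    unfolding glued_eq by simp_all
  then have "out_at k = in_at k"
    using name_subset_eq[OF o e] name_subset_eq[OF i e] by simp
  then show False
    using edge_F_not_S[OF out_at_in_F[OF assms]] in_at_in_S[OF assms] by simp
qed

lemma glued_inj:
  assumes "k < n" "k' < n" "glued k = glued k'" shows "k = k'"
proof -
  have o: "out_at k \<in> edges F" "out_at k' \<in> edges F" and i: "in_at k' \<in> edges S"
    using out_at_in_F in_at_in_S assms(1,2) by blast+
  moreover have "out_at k \<noteq> in_at k'"
    using edge_F_not_S[OF o(1)] i by auto
  ultimately have "out_at k \<inter> in_at k' = {}"
    using names_disjoint[of "out_at k" "in_at k'"] by simp
  then have "out_at k \<subseteq> out_at k'"
    using assms(3) glued_eq by blast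
  then have "out_at k = out_at k'"
    using name_subset_eq o by blast
  then show ?thesis using out.elem_eq_iff assms(1,2) by simp
qed

lemma glue_idx_glued: "k < n \<Longrightarrow> glue_idx S RS F RF (glued k) = k"
  unfolding glue_idx_def by (rule the_equality) (auto dest: glued_inj)

lemma edges_comp: "edges C = F_inner \<union> S_inner \<union> glued ` {..<n}"
  unfolding comp_graph_def by simp

lemma verts_comp: "verts C = (verts F - sinks F) \<union> (verts S - sources S)"
  unfolding comp_graph_def by simp

lemma finite_edges_comp: "finite (edges C)"
  using edges_comp finite_F finite_S by simp

lemma comp_edge_cases:
  assumes "x \<in> edges C"
  obtains (F) "x \<in> F_inner" | (S) "x \<in> S_inner" | (glued) k where "k < n" "x = glued k"
  using assms edges_comp by blast

lemma src_comp_F: "x \<in> F_inner \<Longrightarrow> src C x = src F x"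
  and tgt_comp_F: "x \<in> F_inner \<Longrightarrow> tgt C x = tgt F x"
  and src_comp_S: "x \<in> S_inner \<Longrightarrow> src C x = src S x"
  and tgt_comp_S: "x \<in> S_inner \<Longrightarrow> tgt C x = tgt S x"
  unfolding comp_graph_def using edge_F_not_S by auto

lemma src_comp_glued: "k < n \<Longrightarrow> src C (glued k) = src F (out_at k)"
  and tgt_comp_glued: "k < n \<Longrightarrow> tgt C (glued k) = tgt S (in_at k)"
  unfolding comp_graph_def using glued_not_edge glue_idx_glued by auto

definition merge :: "'a set \<Rightarrow> 'a set" where
  "merge e = (if e \<in> outputs F then glued (out_rank e)
              else if e \<in> inputs S then glued (in_rank e) else e)"

lemma merge_output: "e \<in> outputs F \<Longrightarrow> merge e = glued (out_rank e)"
  and merge_input: "e \<in> inputs S \<Longrightarrow> merge e = glued (in_rank e)"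
  and merge_F_inner: "e \<in> F_inner \<Longrightarrow> merge e = e"
  and merge_S_inner: "e \<in> S_inner \<Longrightarrow> merge e = e"
  unfolding merge_def outputs_def inputs_def using edge_F_not_S by auto

lemma merge_out_at: "k < n \<Longrightarrow> merge (out_at k) = glued k"
  and merge_in_at: "k < n \<Longrightarrow> merge (in_at k) = glued k"
  using merge_output merge_input out_at_in_outputs out_rank_out_at in_at_in_inputs in_rank_in_at
  by simp_all

lemma image_merge_outputs: "merge ` outputs F = glued ` {..<n}"
proof
  show "merge ` outputs F \<subseteq> glued ` {..<n}"
    using merge_output out_at_out_rank by auto
  show "glued ` {..<n} \<subseteq> merge ` outputs F"
    using merge_out_at out_at_in_outputs by (auto intro!: rev_image_eqI)
qed

lemma image_merge_inputs: "merge ` inputs S = glued ` {..<n}"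
proof
  show "merge ` inputs S \<subseteq> glued ` {..<n}"
    using merge_input in_at_in_rank by auto
  show "glued ` {..<n} \<subseteq> merge ` inputs S"
    using merge_in_at in_at_in_inputs by (auto intro!: rev_image_eqI)
qed

lemma image_merge_F: "merge ` edges F = F_inner \<union> glued ` {..<n}"
proof -
  have "edges F = F_inner \<union> outputs F" unfolding outputs_def by blast
  then have "merge ` edges F = merge ` F_inner \<union> merge ` outputs F" by (metis image_Un)
  moreover have "merge ` F_inner = (\<lambda>x. x) ` F_inner"
    by (rule image_cong) (simp_all add: merge_F_inner)
  ultimately show ?thesis using image_merge_outputs by simp
qed

lemma image_merge_S: "merge ` edges S = S_inner \<union> glued ` {..<n}"
proof -
  have "edges S = S_inner \<union> inputs S" unfolding inputs_def by blast
  then have "merge ` edges S = merge ` S_inner \<union> merge ` inputs S" by (metis image_Un)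
  moreover have "merge ` S_inner = (\<lambda>x. x) ` S_inner"
    by (rule image_cong) (simp_all add: merge_S_inner)
  ultimately show ?thesis using image_merge_inputs by simp
qed

lemma edges_comp_merge: "edges C = merge ` edges F \<union> merge ` edges S"
  unfolding edges_comp image_merge_F image_merge_S by blast

lemma merge_in_comp: "e \<in> edges F \<union> edges S \<Longrightarrow> merge e \<in> edges C"
  using edges_comp_merge by blast

lemma merge_eq_glued_F:
  assumes "e \<in> edges F" "k < n" shows "merge e = glued k \<longleftrightarrow> e = out_at k"
proof (cases "e \<in> outputs F")
  case True
  have r: "out_rank e < n" "out_at (out_rank e) = e" using out_at_out_rank[OF True] by simp_all
  have "glued (out_rank e) = glued k \<longleftrightarrow> out_rank e = k" using glued_inj r(1) assms(2) by blast
  moreover have "out_rank e = k \<longleftrightarrow> e = out_at k" using r out_rank_out_at[OF assms(2)] by auto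
  ultimately show ?thesis by (simp add: merge_output[OF True])
next
  case False
  then have "merge e = e" using assms(1) merge_F_inner by simp
  moreover have "e \<noteq> glued k" using glued_not_edge[OF assms(2)] assms(1) by blast
  moreover have "e \<noteq> out_at k" using False out_at_in_outputs[OF assms(2)] by blast
  ultimately show ?thesis by simp
qed

lemma merge_eq_glued_S:
  assumes "e \<in> edges S" "k < n" shows "merge e = glued k \<longleftrightarrow> e = in_at k"
proof (cases "e \<in> inputs S")
  case True
  have r: "in_rank e < n" "in_at (in_rank e) = e" using in_at_in_rank[OF True] by simp_all
  have "glued (in_rank e) = glued k \<longleftrightarrow> in_rank e = k" using glued_inj r(1) assms(2) by blast
  moreover have "in_rank e = k \<longleftrightarrow> e = in_at k" using r in_rank_in_at[OF assms(2)] by auto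
  ultimately show ?thesis by (simp add: merge_input[OF True])
next
  case False
  then have "merge e = e" using assms(1) merge_S_inner by simp
  moreover have "e \<noteq> glued k" using glued_not_edge[OF assms(2)] assms(1) by blast
  moreover have "e \<noteq> in_at k" using False in_at_in_inputs[OF assms(2)] by blast
  ultimately show ?thesis by simp
qed

lemma inj_on_merge_F: "inj_on merge (edges F)"
proof (rule inj_onI)
  fix e e' assume e: "e \<in> edges F" "e' \<in> edges F" and eq: "merge e = merge e'"
  have merge_glued: "merge d = glued (out_rank d) \<and> out_rank d < n" if "d \<in> outputs F" for d
    using merge_output[OF that] out_at_out_rank[OF that] by simp
  show "e = e'"
  proof (cases "e \<in> outputs F")
    case True
    then show ?thesis using eq merge_glued merge_eq_glued_F[OF e(2)] out_at_out_rank by metis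
  next
    case False
    then have "merge e = e" using e(1) merge_F_inner by simp
    moreover have "e' \<notin> outputs F"
      using merge_glued glued_not_edge e(1) eq calculation by (metis UnI1)
    ultimately show ?thesis using eq e(2) merge_F_inner by simp
  qed
qed

lemma inj_on_merge_S: "inj_on merge (edges S)"
proof (rule inj_onI)
  fix e e' assume e: "e \<in> edges S" "e' \<in> edges S" and eq: "merge e = merge e'"
  have merge_glued: "merge d = glued (in_rank d) \<and> in_rank d < n" if "d \<in> inputs S" for d
    using merge_input[OF that] in_at_in_rank[OF that] by simp
  show "e = e'"
  proof (cases "e \<in> inputs S")
    case True
    then show ?thesis using eq merge_glued merge_eq_glued_S[OF e(2)] in_at_in_rank by metis
  next
    case False
    then have "merge e = e" using e(1) merge_S_inner by simp
    moreover have "e' \<notin> inputs S"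
      using merge_glued glued_not_edge e(1) eq calculation by (metis UnI2)
    ultimately show ?thesis using eq e(2) merge_S_inner by simp
  qed
qed

lemma merge_eq_kept_edge:
  assumes e: "e \<in> edges F \<union> edges S" and x: "x \<in> F_inner \<union> S_inner"
  shows "merge e = x \<longleftrightarrow> e = x"
proof (cases "e \<in> outputs F \<union> inputs S")
  case True
  then obtain k where "k < n" "merge e = glued k"
    using merge_output merge_input out_at_out_rank in_at_in_rank by blast
  then have "merge e \<noteq> x" using glued_not_edge[of k] x by auto
  moreover have "e \<noteq> x" using True x edge_F_not_S unfolding outputs_def inputs_def by auto
  ultimately show ?thesis by simp
next
  case False
  then show ?thesis using e merge_F_inner merge_S_inner by auto
qed

lemma fiber_merge:
  assumes "x \<in> edges C"
  shows "{e \<in> edges F \<union> edges S. merge e = x} =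
    (if x \<in> F_inner \<union> S_inner then {x} else
       {out_at (glue_idx S RS F RF x), in_at (glue_idx S RS F RF x)})"
  using assms
proof (cases rule: comp_edge_cases)
  case (glued k)
  have "e \<in> edges F \<union> edges S \<and> merge e = glued k \<longleftrightarrow> e = out_at k \<or> e = in_at k" for e
    using merge_eq_glued_F[of e k] merge_eq_glued_S[of e k] glued(1)
      out_at_in_F[OF glued(1)] in_at_in_S[OF glued(1)] edge_F_not_S by blast
  moreover have "glued k \<notin> F_inner \<union> S_inner" using glued_not_edge[OF glued(1)] by blast
  ultimately show ?thesis using glued glue_idx_glued by auto
next
  case F
  have "e \<in> edges F \<union> edges S \<and> merge e = x \<longleftrightarrow> e = x" for e
    using merge_eq_kept_edge[of e x] F by blast
  then show ?thesis using F by auto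
next
  case S
  have "e \<in> edges F \<union> edges S \<and> merge e = x \<longleftrightarrow> e = x" for e
    using merge_eq_kept_edge[of e x] S by blast
  then show ?thesis using S by auto
qed

lemma comp_edge_eq_Union_fiber:
  assumes "x \<in> edges C"
  shows "{e \<in> edges F \<union> edges S. merge e = x} \<noteq> {}" "x = \<Union>{e \<in> edges F \<union> edges S. merge e = x}"
proof -
  have "x \<notin> F_inner \<union> S_inner \<Longrightarrow>
      x = out_at (glue_idx S RS F RF x) \<union> in_at (glue_idx S RS F RF x)"
    using assms edges_comp glue_idx_glued glued_eq by auto
  then show "{e \<in> edges F \<union> edges S. merge e = x} \<noteq> {}" "x = \<Union>{e \<in> edges F \<union> edges S. merge e = x}"
    unfolding fiber_merge[OF assms] by auto
qed

lemma disjoint_names_comp: "disjoint_names C"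
  unfolding disjoint_names_def
proof (intro conjI ballI impI)
  fix x assume x: "x \<in> edges C"
  then obtain e where e: "e \<in> edges F \<union> edges S" "merge e = x"
    using comp_edge_eq_Union_fiber(1) by blast
  then have "e \<subseteq> x" using comp_edge_eq_Union_fiber(2)[OF x] by blast
  then show "x \<noteq> {}" using name_nonempty[OF e(1)] by blast
next
  fix x y assume x: "x \<in> edges C" and y: "y \<in> edges C" and "x \<noteq> y"
  show "x \<inter> y = {}"
  proof (rule equals0I)
    fix a assume "a \<in> x \<inter> y"
    then obtain e e' where e: "e \<in> edges F \<union> edges S" "merge e = x" "a \<in> e"
      and e': "e' \<in> edges F \<union> edges S" "merge e' = y" "a \<in> e'"
      using comp_edge_eq_Union_fiber(2)[OF x] comp_edge_eq_Union_fiber(2)[OF y] by blast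
    then have "e \<noteq> e'" using \<open>x \<noteq> y\<close> by blast
    then show False using names_disjoint[OF e(1) e'(1)] e(3) e'(3) by blast
  qed
qed

lemma Union_edges_comp: "\<Union>(edges C) \<subseteq> \<Union>(edges F) \<union> \<Union>(edges S)"
  using comp_edge_eq_Union_fiber(2) by blast


abbreviation "block \<equiv> comp_block S RS F RF"

lemma comp_order_iff: "(x, y) \<in> RC \<longleftrightarrow> x \<in> edges C \<and> y \<in> edges C \<and>
   (block x < block y \<or> block x = block y \<and>
      (x \<in> F_inner \<and> y \<in> F_inner \<and> (x, y) \<in> RF \<or> x \<in> S_inner \<and> y \<in> S_inner \<and> (x, y) \<in> RS))"
  unfolding comp_order_def Let_def by simp

lemma comp_order_subset: "RC \<subseteq> edges C \<times> edges C"
  using comp_order_iff by auto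

lemma block_F: "x \<in> F_inner \<Longrightarrow> block x = 3 * (out_rank x + 1)"
  and block_S: "x \<in> S_inner \<Longrightarrow> block x = 3 * in_rank x + 2"
  and block_glued: "k < n \<Longrightarrow> block (glued k) = 3 * (k + 1) + 1"
  unfolding comp_block_def using edge_F_not_S glued_not_edge glue_idx_glued by auto

lemma in_comp_F: "x \<in> F_inner \<Longrightarrow> x \<in> edges C"
  and in_comp_S: "x \<in> S_inner \<Longrightarrow> x \<in> edges C"
  and in_comp_glued: "k < n \<Longrightarrow> glued k \<in> edges C"
  using edges_comp by blast+

lemma F_inner_not_S_inner: "x \<in> F_inner \<Longrightarrow> x \<notin> S_inner"
  using edge_F_not_S by blast

lemma glued_not_inner: "k < n \<Longrightarrow> glued k \<notin> F_inner \<and> glued k \<notin> S_inner"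
  using glued_not_edge by blast

lemma keyF_iff: "x \<in> F_inner \<Longrightarrow> y \<in> F_inner \<Longrightarrow> (x, y) \<in> RF \<longleftrightarrow> fF x < fF y"
  using keyed_order_iff[OF keyed_F] by blast

lemma keyS_iff: "x \<in> S_inner \<Longrightarrow> y \<in> S_inner \<Longrightarrow> (x, y) \<in> RS \<longleftrightarrow> fS x < fS y"
  using keyed_order_iff[OF keyed_S] by blast

lemma comp_order_F_F:
  "x \<in> F_inner \<Longrightarrow> y \<in> F_inner \<Longrightarrow>
     (x, y) \<in> RC \<longleftrightarrow> out_rank x < out_rank y \<or> out_rank x = out_rank y \<and> fF x < fF y"
  using comp_order_iff[of x y] block_F[of x] block_F[of y] in_comp_F F_inner_not_S_inner[of x] keyF_iff[of x y]
  by auto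

lemma comp_order_F_S: "x \<in> F_inner \<Longrightarrow> y \<in> S_inner \<Longrightarrow> (x, y) \<in> RC \<longleftrightarrow> out_rank x < in_rank y"
  using comp_order_iff[of x y] block_F[of x] block_S[of y] in_comp_F[of x] in_comp_S[of y] by auto

lemma comp_order_F_glued: "x \<in> F_inner \<Longrightarrow> k < n \<Longrightarrow> (x, glued k) \<in> RC \<longleftrightarrow> out_rank x \<le> k"
  using comp_order_iff[of x "glued k"] block_F[of x] block_glued[of k] in_comp_F[of x] in_comp_glued[of k]
  by auto

lemma comp_order_S_F: "x \<in> S_inner \<Longrightarrow> y \<in> F_inner \<Longrightarrow> (x, y) \<in> RC \<longleftrightarrow> in_rank x \<le> out_rank y"
  using comp_order_iff[of x y] block_S[of x] block_F[of y] in_comp_S[of x] in_comp_F[of y] by auto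

lemma comp_order_S_S:
  "x \<in> S_inner \<Longrightarrow> y \<in> S_inner \<Longrightarrow>
     (x, y) \<in> RC \<longleftrightarrow> in_rank x < in_rank y \<or> in_rank x = in_rank y \<and> fS x < fS y"
  using comp_order_iff[of x y] block_S[of x] block_S[of y] in_comp_S F_inner_not_S_inner keyS_iff[of x y]
  by auto

lemma comp_order_S_glued: "x \<in> S_inner \<Longrightarrow> k < n \<Longrightarrow> (x, glued k) \<in> RC \<longleftrightarrow> in_rank x \<le> k"
  using comp_order_iff[of x "glued k"] block_S[of x] block_glued[of k] in_comp_S[of x] in_comp_glued[of k]
  by auto

lemma comp_order_glued_F: "k < n \<Longrightarrow> y \<in> F_inner \<Longrightarrow> (glued k, y) \<in> RC \<longleftrightarrow> k < out_rank y"
  using comp_order_iff[of "glued k" y] block_glued[of k] block_F[of y] in_comp_F[of y] in_comp_glued[of k]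
  by auto

lemma comp_order_glued_S: "k < n \<Longrightarrow> y \<in> S_inner \<Longrightarrow> (glued k, y) \<in> RC \<longleftrightarrow> k < in_rank y"
  using comp_order_iff[of "glued k" y] block_glued[of k] block_S[of y] in_comp_S[of y] in_comp_glued[of k]
  by auto

lemma comp_order_glued_glued: "k < n \<Longrightarrow> k' < n \<Longrightarrow> (glued k, glued k') \<in> RC \<longleftrightarrow> k < k'"
  using comp_order_iff[of "glued k" "glued k'"] block_glued[of k] block_glued[of k'] in_comp_glued[of k]
    in_comp_glued[of k'] glued_not_inner[of k] by auto


text \<open>Two keys for the composite order. key_first anchors every edge at an output of F: an
  inner edge of S preceded by r inputs of S lies in the block right after the glued edge r - 1.
  key_second anchors every edge at an input of S: an inner edge of F preceded by r outputs of F
  lies in the block right before the glued edge r.\<close>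

definition key_first :: "'a set \<Rightarrow> 'k1 \<times> nat \<times> 'k2 option" where
  "key_first x =
     (if x \<in> F_inner then (fF x, 0, None)
      else if x \<in> S_inner then (fF (out_at (in_rank x - 1)), 1, Some (fS x))
      else (fF (out_at (glue_idx S RS F RF x)), 0, None))"

definition key_second :: "'a set \<Rightarrow> 'k2 \<times> nat \<times> 'k1 option" where
  "key_second x =
     (if x \<in> S_inner then (fS x, 1, None)
      else if x \<in> F_inner then (fS (in_at (out_rank x)), 0, Some (fF x))
      else (fS (in_at (glue_idx S RS F RF x)), 1, None))"

lemma key_first_F: "x \<in> F_inner \<Longrightarrow> key_first x = (fF x, 0, None)"
  and key_first_S: "x \<in> S_inner \<Longrightarrow> key_first x = (fF (out_at (in_rank x - 1)), 1, Some (fS x))"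
  and key_first_glued: "k < n \<Longrightarrow> key_first (glued k) = (fF (out_at k), 0, None)"
  unfolding key_first_def using F_inner_not_S_inner glued_not_inner glue_idx_glued by auto

lemma key_second_F: "x \<in> F_inner \<Longrightarrow> key_second x = (fS (in_at (out_rank x)), 0, Some (fF x))"
  and key_second_S: "x \<in> S_inner \<Longrightarrow> key_second x = (fS x, 1, None)"
  and key_second_glued: "k < n \<Longrightarrow> key_second (glued k) = (fS (in_at k), 1, None)"
  unfolding key_second_def using F_inner_not_S_inner glued_not_inner glue_idx_glued by auto

lemma key_out_at:
  assumes "a < n" "b < n"
  shows "fF (out_at a) < fF (out_at b) \<longleftrightarrow> a < b" "fF (out_at a) = fF (out_at b) \<longleftrightarrow> a = b"
  using assms out.key_elem_less_iff out.key_elem_eq_iff by auto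

lemma key_out_at_F_inner:
  assumes "x \<in> F_inner" "a < n"
  shows "fF (out_at a) < fF x \<longleftrightarrow> a < out_rank x" "fF (out_at a) \<noteq> fF x"
    "fF x < fF (out_at a) \<longleftrightarrow> out_rank x \<le> a"
  using assms out.key_elem_less_iff_rank out.key_elem_neq out.key_less_elem_iff_rank by auto

lemma key_in_at:
  assumes "a < n" "b < n"
  shows "fS (in_at a) < fS (in_at b) \<longleftrightarrow> a < b" "fS (in_at a) = fS (in_at b) \<longleftrightarrow> a = b"
  using assms inp.key_elem_less_iff inp.key_elem_eq_iff by auto

lemma key_in_at_S_inner:
  assumes "x \<in> S_inner" "a < n"
  shows "fS (in_at a) < fS x \<longleftrightarrow> a < in_rank x" "fS (in_at a) \<noteq> fS x"
    "fS x < fS (in_at a) \<longleftrightarrow> in_rank x \<le> a"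
  using assms inp.key_elem_less_iff_rank inp.key_elem_neq inp.key_less_elem_iff_rank by auto


lemma key_first_merge: "e \<in> edges F \<Longrightarrow> key_first (merge e) = (fF e, 0, None)"
  using merge_output merge_F_inner key_first_glued key_first_F out_at_out_rank
  by (cases "e \<in> outputs F") auto

lemma key_second_merge: "e \<in> edges S \<Longrightarrow> key_second (merge e) = (fS e, 1, None)"
  using merge_input merge_S_inner key_second_glued key_second_S in_at_in_rank
  by (cases "e \<in> inputs S") auto

lemma key_first_tie: "x \<in> edges C \<Longrightarrow> snd (snd (key_first x)) = (if x \<in> S_inner then Some (fS x) else None)"
  unfolding key_first_def using F_inner_not_S_inner by auto

lemma key_second_tie: "x \<in> edges C \<Longrightarrow> snd (snd (key_second x)) = (if x \<in> F_inner then Some (fF x) else None)"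
  unfolding key_second_def using F_inner_not_S_inner by auto

lemma inj_on_key_first: "inj_on key_first (edges C)"
proof (rule inj_onI)
  fix x y assume x: "x \<in> edges C" and y: "y \<in> edges C" and eq: "key_first x = key_first y"
  show "x = y"
  proof (cases "x \<in> S_inner")
    case True
    then have "y \<in> S_inner" "fS x = fS y"
      using key_first_tie[OF x] key_first_tie[OF y] eq by (auto split: if_splits)
    then show ?thesis using True keyed_order_key_eq_iff[OF keyed_S] by blast
  next
    case False
    then have "y \<notin> S_inner"
      using key_first_tie[OF x] key_first_tie[OF y] eq by (auto split: if_splits)
    then have "x \<in> merge ` edges F" "y \<in> merge ` edges F"
      using False x y unfolding edges_comp image_merge_F by blast+
    then obtain e e' where "e \<in> edges F" "x = merge e" "e' \<in> edges F" "y = merge e'"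
      by blast
    then show ?thesis using eq key_first_merge keyed_order_key_eq_iff[OF keyed_F] by auto
  qed
qed

lemma inj_on_key_second: "inj_on key_second (edges C)"
proof (rule inj_onI)
  fix x y assume x: "x \<in> edges C" and y: "y \<in> edges C" and eq: "key_second x = key_second y"
  show "x = y"
  proof (cases "x \<in> F_inner")
    case True
    then have "y \<in> F_inner" "fF x = fF y"
      using key_second_tie[OF x] key_second_tie[OF y] eq by (auto split: if_splits)
    then show ?thesis using True keyed_order_key_eq_iff[OF keyed_F] by blast
  next
    case False
    then have "y \<notin> F_inner"
      using key_second_tie[OF x] key_second_tie[OF y] eq by (auto split: if_splits)
    then have "x \<in> merge ` edges S" "y \<in> merge ` edges S"
      using False x y unfolding edges_comp image_merge_S by blast+
    then obtain e e' where "e \<in> edges S" "x = merge e" "e' \<in> edges S" "y = merge e'"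
      by blast
    then show ?thesis using eq key_second_merge keyed_order_key_eq_iff[OF keyed_S] by auto
  qed
qed

lemma rank_pred_less: "x \<in> S_inner \<Longrightarrow> 0 < in_rank x \<Longrightarrow> in_rank x - 1 < n"
  using rnk_le_card[OF inp.finite, of RS x] by simp

context
  assumes S_after_input: "\<forall>z \<in> S_inner. 0 < in_rank z"
begin

lemma comp_order_key_first_F:
  assumes x: "x \<in> F_inner" and y: "y \<in> edges C"
  shows "(x, y) \<in> RC \<longleftrightarrow> key_first x < key_first y"
  using y
proof (cases rule: comp_edge_cases)
  case F
  then show ?thesis using comp_order_F_F[OF x F] out.rank_order_lex x key_first_F
    by (auto simp del: less_prod_simp simp add: less_triple_iff)
next
  case S
  then have r: "in_rank y - 1 < n" "0 < in_rank y" using rank_pred_less S_after_input by auto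
  show ?thesis using comp_order_F_S[OF x S] key_first_F[OF x] key_first_S[OF S] key_out_at_F_inner[OF x r(1)] r(2)
    by (auto simp del: less_prod_simp simp add: less_triple_iff)
next
  case (glued k)
  then show ?thesis using comp_order_F_glued[OF x glued(1)] key_first_F[OF x] key_first_glued[OF glued(1)]
      key_out_at_F_inner[OF x glued(1)]
    by (auto simp del: less_prod_simp simp add: less_triple_iff)
qed

lemma comp_order_key_first_S:
  assumes x: "x \<in> S_inner" and y: "y \<in> edges C"
  shows "(x, y) \<in> RC \<longleftrightarrow> key_first x < key_first y"
proof -
  have rx: "in_rank x - 1 < n" "0 < in_rank x" using rank_pred_less x S_after_input by auto
  from y show ?thesis
  proof (cases rule: comp_edge_cases)
    case F
    then show ?thesis using comp_order_S_F[OF x F] key_first_S[OF x] key_first_F[OF F]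
        key_out_at_F_inner[OF F rx(1)] rx(2)
      by (auto simp del: less_prod_simp simp add: less_triple_iff)
  next
    case S
    then have ry: "in_rank y - 1 < n" "0 < in_rank y" using rank_pred_less S_after_input by auto
    show ?thesis using comp_order_S_S[OF x S] key_first_S[OF x] key_first_S[OF S]
        key_out_at[OF rx(1) ry(1)] rx ry
      by (auto simp del: less_prod_simp simp add: less_triple_iff)
  next
    case (glued k)
    then show ?thesis using comp_order_S_glued[OF x glued(1)] key_first_S[OF x] key_first_glued[OF glued(1)]
        key_out_at[OF rx(1) glued(1)] rx
      by (auto simp del: less_prod_simp simp add: less_triple_iff)
  qed
qed

lemma comp_order_key_first_glued:
  assumes k: "k < n" and y: "y \<in> edges C"
  shows "(glued k, y) \<in> RC \<longleftrightarrow> key_first (glued k) < key_first y"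
  using y
proof (cases rule: comp_edge_cases)
  case F
  then show ?thesis using comp_order_glued_F[OF k F] key_first_glued[OF k] key_first_F[OF F]
      key_out_at_F_inner[OF F k]
    by (auto simp del: less_prod_simp simp add: less_triple_iff)
next
  case S
  then have ry: "in_rank y - 1 < n" "0 < in_rank y" using rank_pred_less S_after_input by auto
  then show ?thesis using comp_order_glued_S[OF k S] key_first_glued[OF k] key_first_S[OF S]
      key_out_at[OF k ry(1)]
    by (auto simp del: less_prod_simp simp add: less_triple_iff)
next
  case (glued k')
  then show ?thesis using comp_order_glued_glued[OF k glued(1)] key_first_glued key_out_at[OF k glued(1)] k
    by (auto simp del: less_prod_simp simp add: less_triple_iff)
qed

lemma keyed_comp_order_first: "keyed_order RC (edges C) key_first"
proof (rule keyed_orderI)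
  fix x y assume "x \<in> edges C" "y \<in> edges C"
  then show "(x, y) \<in> RC \<longleftrightarrow> key_first x < key_first y"
    by (cases rule: comp_edge_cases)
      (use comp_order_key_first_F comp_order_key_first_S comp_order_key_first_glued in blast)+
qed (fact comp_order_subset, fact inj_on_key_first)

end

context
  assumes F_before_output: "\<forall>z \<in> F_inner. out_rank z < n"
begin

lemma comp_order_key_second_F:
  assumes x: "x \<in> F_inner" and y: "y \<in> edges C"
  shows "(x, y) \<in> RC \<longleftrightarrow> key_second x < key_second y"
proof -
  have rx: "out_rank x < n" using F_before_output x by blast
  from y show ?thesis
  proof (cases rule: comp_edge_cases)
    case F
    then have ry: "out_rank y < n" using F_before_output by blast
    show ?thesis using comp_order_F_F[OF x F] key_second_F[OF x] key_second_F[OF F] key_in_at[OF rx ry]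
      by (auto simp del: less_prod_simp simp add: less_triple_iff)
  next
    case S
    then show ?thesis using comp_order_F_S[OF x S] key_second_F[OF x] key_second_S[OF S]
        key_in_at_S_inner[OF S rx]
      by (auto simp del: less_prod_simp simp add: less_triple_iff)
  next
    case (glued k)
    then show ?thesis using comp_order_F_glued[OF x glued(1)] key_second_F[OF x] key_second_glued[OF glued(1)]
        key_in_at[OF rx glued(1)]
      by (auto simp del: less_prod_simp simp add: less_triple_iff)
  qed
qed

lemma comp_order_key_second_S:
  assumes x: "x \<in> S_inner" and y: "y \<in> edges C"
  shows "(x, y) \<in> RC \<longleftrightarrow> key_second x < key_second y"
  using y
proof (cases rule: comp_edge_cases)
  case F
  then have ry: "out_rank y < n" using F_before_output by blast
  show ?thesis using comp_order_S_F[OF x F] key_second_S[OF x] key_second_F[OF F] key_in_at_S_inner[OF x ry]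
    by (auto simp del: less_prod_simp simp add: less_triple_iff)
next
  case S
  then show ?thesis using comp_order_S_S[OF x S] inp.rank_order_lex x key_second_S
    by (auto simp del: less_prod_simp simp add: less_triple_iff)
next
  case (glued k)
  then show ?thesis using comp_order_S_glued[OF x glued(1)] key_second_S[OF x] key_second_glued[OF glued(1)]
      key_in_at_S_inner[OF x glued(1)]
    by (auto simp del: less_prod_simp simp add: less_triple_iff)
qed

lemma comp_order_key_second_glued:
  assumes k: "k < n" and y: "y \<in> edges C"
  shows "(glued k, y) \<in> RC \<longleftrightarrow> key_second (glued k) < key_second y"
  using y
proof (cases rule: comp_edge_cases)
  case F
  then have ry: "out_rank y < n" using F_before_output by blast
  show ?thesis using comp_order_glued_F[OF k F] key_second_glued[OF k] key_second_F[OF F] key_in_at[OF k ry]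
    by (auto simp del: less_prod_simp simp add: less_triple_iff)
next
  case S
  then show ?thesis using comp_order_glued_S[OF k S] key_second_glued[OF k] key_second_S[OF S]
      key_in_at_S_inner[OF S k]
    by (auto simp del: less_prod_simp simp add: less_triple_iff)
next
  case (glued k')
  then show ?thesis using comp_order_glued_glued[OF k glued(1)] key_second_glued key_in_at[OF k glued(1)] k
    by (auto simp del: less_prod_simp simp add: less_triple_iff)
qed

lemma keyed_comp_order_second: "keyed_order RC (edges C) key_second"
proof (rule keyed_orderI)
  fix x y assume "x \<in> edges C" "y \<in> edges C"
  then show "(x, y) \<in> RC \<longleftrightarrow> key_second x < key_second y"
    by (cases rule: comp_edge_cases)
      (use comp_order_key_second_F comp_order_key_second_S comp_order_key_second_glued in blast)+
qed (fact comp_order_subset, fact inj_on_key_second)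

end

end

lemma src_not_sink: "finite (edges G) \<Longrightarrow> e \<in> edges G \<Longrightarrow> src G e \<notin> sinks G"
  unfolding sinks_def by (auto simp: outdeg_eq_0_iff)

lemma tgt_not_source: "finite (edges G) \<Longrightarrow> e \<in> edges G \<Longrightarrow> tgt G e \<notin> sources G"
  unfolding sources_def by (auto simp: indeg_eq_0_iff)

locale progressive_composition = composition +
  assumes progressive_F: "progressive F" and progressive_S: "progressive S"
    and disjoint_verts: "verts F \<inter> verts S = {}"
begin

lemma src_comp_merge_F: "e \<in> edges F \<Longrightarrow> src C (merge e) = src F e"
  using merge_output merge_F_inner src_comp_glued src_comp_F out_at_out_rank
  by (cases "e \<in> outputs F") auto

lemma tgt_comp_merge_S: "e \<in> edges S \<Longrightarrow> tgt C (merge e) = tgt S e"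
  using merge_input merge_S_inner tgt_comp_glued tgt_comp_S in_at_in_rank
  by (cases "e \<in> inputs S") auto

lemma src_comp_S_verts: "x \<in> S_inner \<Longrightarrow> src C x \<in> verts S"
  using src_comp_S progressive_src_in_verts[OF progressive_S] by simp

lemma tgt_comp_S_verts: "x \<in> merge ` edges S \<Longrightarrow> tgt C x \<in> verts S"
  using tgt_comp_merge_S progressive_tgt_in_verts[OF progressive_S] by auto

lemma src_comp_F_verts: "x \<in> merge ` edges F \<Longrightarrow> src C x \<in> verts F"
  using src_comp_merge_F progressive_src_in_verts[OF progressive_F] by auto

lemma tgt_comp_F_verts: "x \<in> F_inner \<Longrightarrow> tgt C x \<in> verts F"
  using tgt_comp_F progressive_tgt_in_verts[OF progressive_F] by simp

lemma edges_comp_F_side: "edges C = merge ` edges F \<union> S_inner"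
  unfolding edges_comp image_merge_F by blast

lemma edges_comp_S_side: "edges C = F_inner \<union> merge ` edges S"
  unfolding edges_comp image_merge_S by blast

lemma out_edges_comp_F:
  assumes "v \<in> verts F"
  shows "{x \<in> edges C. src C x = v} = merge ` {e \<in> edges F. src F e = v}"
proof -
  have "src C x \<noteq> v" if "x \<in> S_inner" for x
    using src_comp_S_verts[OF that] assms disjoint_verts by blast
  then show ?thesis unfolding edges_comp_F_side using src_comp_merge_F by auto
qed

lemma in_edges_comp_S:
  assumes "v \<in> verts S"
  shows "{x \<in> edges C. tgt C x = v} = merge ` {e \<in> edges S. tgt S e = v}"
proof -
  have "tgt C x \<noteq> v" if "x \<in> F_inner" for x
    using tgt_comp_F_verts[OF that] assms disjoint_verts by blast
  then show ?thesis unfolding edges_comp_S_side using tgt_comp_merge_S by auto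
qed

lemma in_edges_comp_F:
  assumes "v \<in> verts F - sinks F"
  shows "{x \<in> edges C. tgt C x = v} = {e \<in> edges F. tgt F e = v}"
proof -
  have "tgt C x \<noteq> v" if "x \<in> merge ` edges S" for x
    using tgt_comp_S_verts[OF that] assms disjoint_verts by blast
  moreover have "e \<notin> outputs F" if "e \<in> edges F" "tgt F e = v" for e
    using that assms outdeg_tgt_output[OF progressive_F] unfolding sinks_def by auto
  ultimately show ?thesis unfolding edges_comp_S_side using tgt_comp_F by auto
qed

lemma out_edges_comp_S:
  assumes "v \<in> verts S - sources S"
  shows "{x \<in> edges C. src C x = v} = {e \<in> edges S. src S e = v}"
proof -
  have "src C x \<noteq> v" if "x \<in> merge ` edges F" for x
    using src_comp_F_verts[OF that] assms disjoint_verts by blast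
  moreover have "e \<notin> inputs S" if "e \<in> edges S" "src S e = v" for e
    using that assms indeg_src_input[OF progressive_S] unfolding sources_def by auto
  ultimately show ?thesis unfolding edges_comp_F_side using src_comp_S by auto
qed

lemma degrees_comp_F:
  assumes "v \<in> verts F - sinks F"
  shows "indeg C v = indeg F v" "outdeg C v = outdeg F v"
proof -
  show "indeg C v = indeg F v" unfolding indeg_def using in_edges_comp_F[OF assms] by simp
  have "card (merge ` {e \<in> edges F. src F e = v}) = card {e \<in> edges F. src F e = v}"
    by (rule card_image) (rule inj_on_subset[OF inj_on_merge_F], blast)
  then show "outdeg C v = outdeg F v" unfolding outdeg_def using out_edges_comp_F assms by simp
qed

lemma degrees_comp_S:
  assumes "v \<in> verts S - sources S"
  shows "indeg C v = indeg S v" "outdeg C v = outdeg S v"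
proof -
  show "outdeg C v = outdeg S v" unfolding outdeg_def using out_edges_comp_S[OF assms] by simp
  have "card (merge ` {e \<in> edges S. tgt S e = v}) = card {e \<in> edges S. tgt S e = v}"
    by (rule card_image) (rule inj_on_subset[OF inj_on_merge_S], blast)
  then show "indeg C v = indeg S v" unfolding indeg_def using in_edges_comp_S assms by simp
qed

lemma sources_comp: "sources C = sources F - sinks F"
proof -
  have "sources C = {v \<in> verts F - sinks F. indeg C v = 0} \<union> {v \<in> verts S - sources S. indeg C v = 0}"
    unfolding sources_def verts_comp by blast
  also have "{v \<in> verts S - sources S. indeg C v = 0} = {}"
  proof -
    have "indeg C v \<noteq> 0" if "v \<in> verts S - sources S" for v
      using that degrees_comp_S(1)[OF that] unfolding sources_def by simp
    then show ?thesis by blast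
  qed
  also have "{v \<in> verts F - sinks F. indeg C v = 0} = sources F - sinks F"
    using degrees_comp_F(1) unfolding sources_def by auto
  finally show ?thesis by simp
qed

lemma sinks_comp: "sinks C = sinks S - sources S"
proof -
  have "sinks C = {v \<in> verts F - sinks F. outdeg C v = 0} \<union> {v \<in> verts S - sources S. outdeg C v = 0}"
    unfolding sinks_def verts_comp by blast
  also have "{v \<in> verts F - sinks F. outdeg C v = 0} = {}"
  proof -
    have "outdeg C v \<noteq> 0" if "v \<in> verts F - sinks F" for v
      using that degrees_comp_F(2)[OF that] unfolding sinks_def by simp
    then show ?thesis by blast
  qed
  also have "{v \<in> verts S - sources S. outdeg C v = 0} = sinks S - sources S"
    using degrees_comp_S(2) unfolding sinks_def by auto
  finally show ?thesis by simp
qed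

lemma boundary_comp_F: "v \<in> verts F - sinks F \<Longrightarrow> v \<in> boundary C \<longleftrightarrow> v \<in> boundary F"
  using degrees_comp_F verts_comp unfolding boundary_def deg_def by auto

lemma boundary_comp_S: "v \<in> verts S - sources S \<Longrightarrow> v \<in> boundary C \<longleftrightarrow> v \<in> boundary S"
  using degrees_comp_S verts_comp unfolding boundary_def deg_def by auto

lemma inputs_comp: "inputs C = merge ` inputs F"
proof -
  have F: "merge e \<in> inputs C \<longleftrightarrow> e \<in> inputs F" if e: "e \<in> edges F" for e
  proof -
    have "src F e \<in> verts F - sinks F"
      using e progressive_src_in_verts[OF progressive_F] src_not_sink[OF finite_F] by blast
    then show ?thesis
      using boundary_comp_F src_comp_merge_F[OF e] merge_in_comp e unfolding inputs_def by auto
  qed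
  have S: "x \<notin> inputs C" if x: "x \<in> S_inner" for x
  proof -
    have "src S x \<in> verts S - sources S"
      using x progressive_src_in_verts[OF progressive_S] input_if_src_source[OF progressive_S]
      by blast
    then show ?thesis using boundary_comp_S src_comp_S x unfolding inputs_def by auto
  qed
  show ?thesis
  proof (rule set_eqI, rule iffI)
    fix x assume x: "x \<in> inputs C"
    then have "x \<in> edges C" unfolding inputs_def by blast
    then obtain e where "e \<in> edges F" "x = merge e"
      using x F S unfolding edges_comp_F_side by blast
    then show "x \<in> merge ` inputs F" using x F by blast
  next
    fix x assume "x \<in> merge ` inputs F"
    then obtain e where "e \<in> inputs F" "x = merge e" by blast
    moreover have "inputs F \<subseteq> edges F" unfolding inputs_def by blast
    ultimately show "x \<in> inputs C" using F by blast
  qed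
qed

lemma outputs_comp: "outputs C = merge ` outputs S"
proof -
  have S: "merge e \<in> outputs C \<longleftrightarrow> e \<in> outputs S" if e: "e \<in> edges S" for e
  proof -
    have "tgt S e \<in> verts S - sources S"
      using e progressive_tgt_in_verts[OF progressive_S] tgt_not_source[OF finite_S] by blast
    then show ?thesis
      using boundary_comp_S tgt_comp_merge_S[OF e] merge_in_comp e unfolding outputs_def by auto
  qed
  have F: "x \<notin> outputs C" if x: "x \<in> F_inner" for x
  proof -
    have "tgt F x \<in> verts F - sinks F"
      using x progressive_tgt_in_verts[OF progressive_F] output_if_tgt_sink[OF progressive_F]
      by blast
    then show ?thesis using boundary_comp_F tgt_comp_F x unfolding outputs_def by auto
  qed
  show ?thesis
  proof (rule set_eqI, rule iffI)
    fix x assume x: "x \<in> outputs C"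
    then have "x \<in> edges C" unfolding outputs_def by blast
    then obtain e where "e \<in> edges S" "x = merge e"
      using x F S unfolding edges_comp_S_side by blast
    then show "x \<in> merge ` outputs S" using x S by blast
  next
    fix x assume "x \<in> merge ` outputs S"
    then obtain e where "e \<in> outputs S" "x = merge e" by blast
    moreover have "outputs S \<subseteq> edges S" unfolding outputs_def by blast
    ultimately show "x \<in> outputs C" using S by blast
  qed
qed

end

section \<open>Associativity\<close>

lemma rnk_image:
  assumes R: "keyed_order R E f" and R': "keyed_order R' E' f'" and T: "T \<subseteq> E" "inj_on h T"
    and h: "\<And>x y. x \<in> T \<Longrightarrow> y \<in> T \<Longrightarrow> h x \<in> E' \<and> (f' (h x) < f' (h y) \<longleftrightarrow> f x < f y)"
    and x: "x \<in> T"
  shows "rnk R' (h ` T) (h x) = rnk R T x"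
proof -
  have "{y \<in> h ` T. (y, h x) \<in> R'} = h ` {t \<in> T. (h t, h x) \<in> R'}" by blast
  moreover have "{t \<in> T. (h t, h x) \<in> R'} = {t \<in> T. (t, x) \<in> R}"
    using keyed_order_iff[OF R] keyed_order_iff[OF R'] h x T(1) by blast
  moreover have "card (h ` {t \<in> T. (t, x) \<in> R}) = card {t \<in> T. (t, x) \<in> R}"
    by (rule card_image) (rule inj_on_subset[OF T(2)], blast)
  ultimately show ?thesis unfolding rnk_def by simp
qed

lemma nth_in_image:
  assumes R: "keyed_order R E f" and R': "keyed_order R' E' f'" and T: "T \<subseteq> E" "inj_on h T" "finite T"
    and h: "\<And>x y. x \<in> T \<Longrightarrow> y \<in> T \<Longrightarrow> h x \<in> E' \<and> (f' (h x) < f' (h y) \<longleftrightarrow> f x < f y)"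
    and k: "k < card T"
  shows "nth_in R' (h ` T) k = h (nth_in R T k)"
proof -
  interpret T: ranked_subset R E f T by unfold_locales (use R T in auto)
  interpret hT: ranked_subset R' E' f' "h ` T" by unfold_locales (use R' T h in auto)
  have x: "T.elem k \<in> T" "T.rank (T.elem k) = k" using T.elem_mem_rank_elem[OF k] by auto
  then have "hT.rank (h (T.elem k)) = k" using rnk_image[OF R R' T(1,2) h] by simp
  then show ?thesis using hT.elem_rank x(1) by (metis imageI)
qed

locale pop_triple =
  fixes G1 G2 G3 :: "('v, 'a set) pgraph" and R1 R2 R3 :: "('a set \<times> 'a set) set"
  assumes pop1: "pop G1 R1" and pop2: "pop G2 R2" and pop3: "pop G3 R3"
    and card12: "card (outputs G1) = card (inputs G2)"
    and card23: "card (outputs G2) = card (inputs G3)"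
    and names1: "disjoint_names G1" and names2: "disjoint_names G2" and names3: "disjoint_names G3"
    and names12: "\<Union>(edges G1) \<inter> \<Union>(edges G2) = {}"
    and names13: "\<Union>(edges G1) \<inter> \<Union>(edges G3) = {}"
    and names23: "\<Union>(edges G2) \<inter> \<Union>(edges G3) = {}"
    and verts12: "verts G1 \<inter> verts G2 = {}"
    and verts23: "verts G2 \<inter> verts G3 = {}"
begin

abbreviation "f1 \<equiv> rnk R1 (edges G1)"
abbreviation "f2 \<equiv> rnk R2 (edges G2)"
abbreviation "f3 \<equiv> rnk R3 (edges G3)"

lemma progressive: "progressive G1" "progressive G2" "progressive G3"
  using pop_progressive pop1 pop2 pop3 by blast+

lemma keyed: "keyed_order R1 (edges G1) f1" "keyed_order R2 (edges G2) f2" "keyed_order R3 (edges G3) f3"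
  using pop_keyed_order_rnk pop1 pop2 pop3 by blast+

sublocale G12: progressive_composition G1 R1 f1 G2 R2 f2
  by unfold_locales (use progressive progressive_finite_edges keyed
      card12 names1 names2 names12 verts12 in simp_all)

sublocale G23: progressive_composition G2 R2 f2 G3 R3 f3
  by unfold_locales (use progressive progressive_finite_edges keyed
      card23 names2 names3 names23 verts23 in simp_all)

lemma keyed_G12: "keyed_order G12.RC (edges G12.C) G12.key_second"
  by (rule G12.keyed_comp_order_second) (intro ballI rnk_outputs_less_card[OF pop1])

lemma keyed_G23: "keyed_order G23.RC (edges G23.C) G23.key_first"
  by (rule G23.keyed_comp_order_first) (intro ballI rnk_inputs_pos[OF pop3])

lemma inputs_G2_subset: "inputs G2 \<subseteq> edges G2"
  and outputs_G2_subset: "outputs G2 \<subseteq> edges G2"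
  unfolding inputs_def outputs_def by auto

lemma card_inputs_G23: "card (inputs G23.C) = card (outputs G1)"
  using G23.inputs_comp card_image[OF inj_on_subset[OF G23.inj_on_merge_F inputs_G2_subset]] by simp

lemma card_outputs_G12: "card (outputs G12.C) = card (inputs G3)"
  using G12.outputs_comp card_image[OF inj_on_subset[OF G12.inj_on_merge_S outputs_G2_subset]]
  by simp

lemma nth_inputs_G23:
  "k < card (outputs G1) \<Longrightarrow> nth_in G23.RC (inputs G23.C) k = G23.merge (G12.in_at k)"
  unfolding G23.inputs_comp
  by (rule nth_in_image[OF pop_keyed_order_rnk[OF pop2] keyed_G23 inputs_G2_subset
        inj_on_subset[OF G23.inj_on_merge_F inputs_G2_subset]])
    (use G12.inp.finite G23.merge_in_comp inputs_G2_subset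
        G23.key_first_merge[OF subsetD[OF inputs_G2_subset]] in auto)

lemma nth_outputs_G12:
  "j < card (outputs G2) \<Longrightarrow> nth_in G12.RC (outputs G12.C) j = G12.merge (G23.out_at j)"
  unfolding G12.outputs_comp
  by (rule nth_in_image[OF pop_keyed_order_rnk[OF pop2] keyed_G12 outputs_G2_subset
        inj_on_subset[OF G12.inj_on_merge_S outputs_G2_subset]])
    (use G23.out.finite G12.merge_in_comp outputs_G2_subset
        G12.key_second_merge[OF subsetD[OF outputs_G2_subset]] in auto)

lemma names_1_23: "\<Union>(edges G1) \<inter> \<Union>(edges G23.C) = {}"
  using G23.Union_edges_comp names12 names13 by blast

lemma names_12_3: "\<Union>(edges G12.C) \<inter> \<Union>(edges G3) = {}"
  using G12.Union_edges_comp names13 names23 by blast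

sublocale L: composition G1 R1 f1 G23.C G23.RC G23.key_first
  by unfold_locales (use G12.finite_F G23.finite_edges_comp G12.keyed_F keyed_G23 card_inputs_G23
      names1 G23.disjoint_names_comp names_1_23 in simp_all)

sublocale R: composition G12.C G12.RC G12.key_second G3 R3 f3
  by unfold_locales (use G12.finite_edges_comp G23.finite_S keyed_G12 G23.keyed_S card_outputs_G12
      G12.disjoint_names_comp names3 names_12_3 in simp_all)

lemma keyed_L: "keyed_order L.RC (edges L.C) L.key_second"
  by (rule L.keyed_comp_order_second) (intro ballI rnk_outputs_less_card[OF pop1])

lemma keyed_R: "keyed_order R.RC (edges R.C) R.key_first"
  by (rule R.keyed_comp_order_first) (intro ballI rnk_inputs_pos[OF pop3])

lemma R_in_at: "R.in_at j = G23.in_at j" ..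

lemma L_in_at: "k < card (outputs G1) \<Longrightarrow> L.in_at k = G23.merge (G12.in_at k)"
  using nth_inputs_G23 by simp

lemma R_out_at: "j < card (outputs G2) \<Longrightarrow> R.out_at j = G12.merge (G23.out_at j)"
  using nth_outputs_G12 by simp

lemma R_n: "R.n = card (outputs G2)"
  using card_outputs_G12 by simp

lemma L_glued: "k < card (outputs G1) \<Longrightarrow> L.glued k = G12.out_at k \<union> G23.merge (G12.in_at k)"
  using L.glued_eq L_in_at by simp

lemma R_glued: "j < card (outputs G2) \<Longrightarrow> R.glued j = G12.merge (G23.out_at j) \<union> G23.in_at j"
  using R.glued_eq R_out_at by simp

end

text \<open>Both keys of an edge of the triple composite are computed from a common key (P, t, z):
  P is the rank in G2 of the edge it is anchored at, t records whether the edge stems from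
  G1 (t = 0), from G2 (t = 1) or from G3 (t = 2), and z is the tie-break within G1 or G3.\<close>

definition key_domain :: "(nat \<times> nat \<times> nat option) set" where
  "key_domain = {(P, t, z). t \<le> 2 \<and> (t = 1 \<longrightarrow> z = None)}"

definition key_left :: "nat \<times> nat \<times> nat option \<Rightarrow> (nat \<times> nat \<times> nat option) \<times> nat \<times> nat option" where
  "key_left = (\<lambda>(P, t, z). if t = 0 then ((P, 0, None), 0, z)
                           else if t = 1 then ((P, 0, None), 1, None) else ((P, 1, z), 1, None))"

definition key_right :: "nat \<times> nat \<times> nat option \<Rightarrow> (nat \<times> nat \<times> nat option) \<times> nat \<times> nat option" where
  "key_right = (\<lambda>(P, t, z). if t = 0 then ((P, 0, z), 0, None)
                            else if t = 1 then ((P, 1, None), 0, None) else ((P, 1, None), 1, z))"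

lemma key_domain_cases:
  assumes "v \<in> key_domain"
  obtains P z where "v = (P, 0, z)" | P where "v = (P, 1, None)" | P z where "v = (P, 2, z)"
  using assms unfolding key_domain_def by (cases v) (auto simp: le_Suc_eq numeral_2_eq_2)

lemma key_left_less_iff: "a \<in> key_domain \<Longrightarrow> b \<in> key_domain \<Longrightarrow> key_left a < key_left b \<longleftrightarrow> a < b"
  by (elim key_domain_cases) (auto simp: key_left_def less_triple_iff simp del: less_prod_simp)

lemma key_right_less_iff: "a \<in> key_domain \<Longrightarrow> b \<in> key_domain \<Longrightarrow> key_right a < key_right b \<longleftrightarrow> a < b"
  by (elim key_domain_cases) (auto simp: key_right_def less_triple_iff simp del: less_prod_simp)

lemma key_domain_iff: "(P, 0, z) \<in> key_domain" "(P, 1, None) \<in> key_domain" "(P, 2, z) \<in> key_domain"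
  unfolding key_domain_def by simp_all

lemma key_left_simps:
  "key_left (P, 0, z) = ((P, 0, None), 0, z)" "key_left (P, 1, None) = ((P, 0, None), 1, None)"
  "key_left (P, 2, z) = ((P, 1, z), 1, None)"
  unfolding key_left_def by simp_all

lemma key_right_simps:
  "key_right (P, 0, z) = ((P, 0, z), 0, None)" "key_right (P, 1, None) = ((P, 1, None), 0, None)"
  "key_right (P, 2, z) = ((P, 1, None), 1, z)"
  unfolding key_right_def by simp_all

context pop_triple
begin

definition triple_edge :: "'a set \<Rightarrow> bool" where
  "triple_edge x \<longleftrightarrow>
     x \<in> edges G1 - outputs G1 \<or> x \<in> edges G2 - inputs G2 - outputs G2 \<or> x \<in> edges G3 - inputs G3 \<or>
     (\<exists>k < G12.n. G12.in_at k \<notin> outputs G2 \<and> x = G12.glued k) \<or>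
     (\<exists>j < G23.n. G23.out_at j \<notin> inputs G2 \<and> x = G23.glued j) \<or>
     (\<exists>k < G12.n. \<exists>j < G23.n. G12.in_at k = G23.out_at j \<and> x = G12.out_at k \<union> G23.glued j)"

definition common_edge :: "'a set \<Rightarrow> bool" where
  "common_edge x \<longleftrightarrow> x \<in> edges L.C \<and> x \<in> edges R.C \<and>
     src L.C x = src R.C x \<and> tgt L.C x = tgt R.C x \<and>
     (\<exists>v \<in> key_domain. L.key_second x = key_left v \<and> R.key_first x = key_right v)"

lemma merge_in_inputs_G23_iff: "i \<in> edges G2 \<Longrightarrow> G23.merge i \<in> inputs G23.C \<longleftrightarrow> i \<in> inputs G2"
  unfolding G23.inputs_comp by (rule inj_on_image_mem_iff[OF G23.inj_on_merge_F _ inputs_G2_subset])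

lemma merge_in_outputs_G12_iff: "i \<in> edges G2 \<Longrightarrow> G12.merge i \<in> outputs G12.C \<longleftrightarrow> i \<in> outputs G2"
  unfolding G12.outputs_comp by (rule inj_on_image_mem_iff[OF G12.inj_on_merge_S _ outputs_G2_subset])

lemma G3_inner_not_input_G23:
  assumes "x \<in> edges G3" shows "x \<notin> inputs G23.C"
proof
  assume "x \<in> inputs G23.C"
  then have "x \<in> G23.merge ` edges G2" unfolding G23.inputs_comp using inputs_G2_subset by blast
  moreover have "x \<notin> G23.F_inner" using G23.edge_F_not_S assms by blast
  moreover have "x \<notin> G23.glued ` {..<G23.n}" using G23.glued_not_edge assms by blast
  ultimately show False unfolding G23.image_merge_F by blast
qed

lemma G1_inner_not_output_G12:
  assumes "x \<in> edges G1" shows "x \<notin> outputs G12.C"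
proof
  assume "x \<in> outputs G12.C"
  then have "x \<in> G12.merge ` edges G2" unfolding G12.outputs_comp using outputs_G2_subset by blast
  moreover have "x \<notin> G12.S_inner" using G12.edge_F_not_S assms by blast
  moreover have "x \<notin> G12.glued ` {..<G12.n}" using G12.glued_not_edge assms by blast
  ultimately show False unfolding G12.image_merge_S by blast
qed

lemma common_edge_G1_inner:
  assumes x: "x \<in> edges G1 - outputs G1" shows "common_edge x"
proof -
  define r where "r = G12.out_rank x"
  have r: "r < G12.n" using rnk_outputs_less_card[OF pop1 x] unfolding r_def .
  have xR: "x \<in> R.F_inner" using G12.in_comp_F[OF x] G1_inner_not_output_G12 x by blast
  have "L.key_second x = key_left (f2 (G12.in_at r), 0, Some (f1 x))"
    using L.key_second_F[OF x] L_in_at[OF r] G23.key_first_merge[OF G12.in_at_in_S[OF r]] key_left_simps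
    unfolding r_def by simp
  moreover have "R.key_first x = key_right (f2 (G12.in_at r), 0, Some (f1 x))"
    using R.key_first_F[OF xR] G12.key_second_F[OF x] key_right_simps unfolding r_def by simp
  moreover have "src L.C x = src R.C x" "tgt L.C x = tgt R.C x"
    using L.src_comp_F[OF x] R.src_comp_F[OF xR] G12.src_comp_F[OF x]
      L.tgt_comp_F[OF x] R.tgt_comp_F[OF xR] G12.tgt_comp_F[OF x] by simp_all
  ultimately show ?thesis
    unfolding common_edge_def using L.in_comp_F[OF x] R.in_comp_F[OF xR] key_domain_iff by blast
qed

lemma common_edge_G2_inner:
  assumes x: "x \<in> edges G2 - inputs G2 - outputs G2" shows "common_edge x"
proof -
  have x23: "x \<in> G23.F_inner" and x12: "x \<in> G12.S_inner" using x by blast+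
  have "x \<notin> inputs G23.C" using merge_in_inputs_G23_iff[of x] G23.merge_F_inner[OF x23] x by simp
  then have xL: "x \<in> L.S_inner" using G23.in_comp_F[OF x23] by blast
  have "x \<notin> outputs G12.C" using merge_in_outputs_G12_iff[of x] G12.merge_S_inner[OF x12] x by simp
  then have xR: "x \<in> R.F_inner" using G12.in_comp_S[OF x12] by blast
  have "L.key_second x = key_left (f2 x, 1, None)"
    using L.key_second_S[OF xL] G23.key_first_F[OF x23] key_left_simps by simp
  moreover have "R.key_first x = key_right (f2 x, 1, None)"
    using R.key_first_F[OF xR] G12.key_second_S[OF x12] key_right_simps by simp
  moreover have "src L.C x = src R.C x" "tgt L.C x = tgt R.C x"
    using L.src_comp_S[OF xL] R.src_comp_F[OF xR] G23.src_comp_F[OF x23] G12.src_comp_S[OF x12]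
      L.tgt_comp_S[OF xL] R.tgt_comp_F[OF xR] G23.tgt_comp_F[OF x23] G12.tgt_comp_S[OF x12] by simp_all
  ultimately show ?thesis
    unfolding common_edge_def using L.in_comp_S[OF xL] R.in_comp_F[OF xR] key_domain_iff by blast
qed

lemma common_edge_G3_inner:
  assumes x: "x \<in> edges G3 - inputs G3" shows "common_edge x"
proof -
  define s where "s = G23.in_rank x"
  have s: "0 < s" "s - 1 < G23.n"
    using rnk_inputs_pos[OF pop3 x] G23.rank_pred_less[OF x] unfolding s_def by simp_all
  have xL: "x \<in> L.S_inner" using G23.in_comp_S[OF x] G3_inner_not_input_G23 x by blast
  have o: "G23.out_at (s - 1) \<in> edges G2" using G23.out_at_in_F[OF s(2)] .
  have "L.key_second x = key_left (f2 (G23.out_at (s - 1)), 2, Some (f3 x))"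
    using L.key_second_S[OF xL] G23.key_first_S[OF x] key_left_simps unfolding s_def by simp
  moreover have "R.key_first x = key_right (f2 (G23.out_at (s - 1)), 2, Some (f3 x))"
    using R.key_first_S[OF x] R_out_at[OF s(2)] G12.key_second_merge[OF o] key_right_simps
    unfolding s_def by simp
  moreover have "src L.C x = src R.C x" "tgt L.C x = tgt R.C x"
    using L.src_comp_S[OF xL] R.src_comp_S[OF x] G23.src_comp_S[OF x]
      L.tgt_comp_S[OF xL] R.tgt_comp_S[OF x] G23.tgt_comp_S[OF x] by simp_all
  ultimately show ?thesis
    unfolding common_edge_def using L.in_comp_S[OF xL] R.in_comp_S[OF x] key_domain_iff by blast
qed

lemma common_edge_glued12:
  assumes k: "k < G12.n" and i: "G12.in_at k \<notin> outputs G2" shows "common_edge (G12.glued k)"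
proof -
  have i23: "G12.in_at k \<in> G23.F_inner" using G12.in_at_in_S[OF k] i by blast
  have L_glued_k: "L.glued k = G12.glued k"
    using L_glued[OF k] G23.merge_F_inner[OF i23] G12.glued_eq by simp
  have xR: "G12.glued k \<in> R.F_inner"
    using G12.in_comp_glued[OF k] merge_in_outputs_G12_iff[OF G12.in_at_in_S[OF k]] G12.merge_in_at[OF k] i
    by auto
  have "L.key_second (G12.glued k) = key_left (f2 (G12.in_at k), 1, None)"
    using L.key_second_glued[OF k] L_glued_k L_in_at[OF k] G23.key_first_merge[OF G12.in_at_in_S[OF k]]
      key_left_simps by simp
  moreover have "R.key_first (G12.glued k) = key_right (f2 (G12.in_at k), 1, None)"
    using R.key_first_F[OF xR] G12.key_second_glued[OF k] key_right_simps by simp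
  moreover have "src L.C (G12.glued k) = src R.C (G12.glued k)"
    using L.src_comp_glued[OF k] L_glued_k R.src_comp_F[OF xR] G12.src_comp_glued[OF k] by simp
  moreover have "tgt L.C (G12.glued k) = tgt R.C (G12.glued k)"
    using L.tgt_comp_glued[OF k] L_glued_k L_in_at[OF k] G23.merge_F_inner[OF i23] G23.tgt_comp_F[OF i23]
      R.tgt_comp_F[OF xR] G12.tgt_comp_glued[OF k] by simp
  ultimately show ?thesis
    unfolding common_edge_def using L.in_comp_glued[OF k] L_glued_k R.in_comp_F[OF xR] key_domain_iff
    by metis
qed

lemma common_edge_glued23:
  assumes j: "j < G23.n" and o: "G23.out_at j \<notin> inputs G2" shows "common_edge (G23.glued j)"
proof -
  have o12: "G23.out_at j \<in> G12.S_inner" using G23.out_at_in_F[OF j] o by blast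
  have jR: "j < R.n" using j R_n by simp
  have R_glued_j: "R.glued j = G23.glued j"
    using R_glued[OF j] G12.merge_S_inner[OF o12] G23.glued_eq by simp
  have xL: "G23.glued j \<in> L.S_inner"
    using G23.in_comp_glued[OF j] merge_in_inputs_G23_iff[OF G23.out_at_in_F[OF j]] G23.merge_out_at[OF j] o
    by auto
  have "L.key_second (G23.glued j) = key_left (f2 (G23.out_at j), 1, None)"
    using L.key_second_S[OF xL] G23.key_first_glued[OF j] key_left_simps by simp
  moreover have "R.key_first (G23.glued j) = key_right (f2 (G23.out_at j), 1, None)"
    using R.key_first_glued[OF jR] R_glued_j R_out_at[OF j] G12.key_second_merge[OF G23.out_at_in_F[OF j]]
      key_right_simps by simp
  moreover have "src L.C (G23.glued j) = src R.C (G23.glued j)"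
    using L.src_comp_S[OF xL] G23.src_comp_glued[OF j] R.src_comp_glued[OF jR] R_glued_j R_out_at[OF j]
      G12.merge_S_inner[OF o12] G12.src_comp_S[OF o12] by simp
  moreover have "tgt L.C (G23.glued j) = tgt R.C (G23.glued j)"
    using L.tgt_comp_S[OF xL] G23.tgt_comp_glued[OF j] R.tgt_comp_glued[OF jR] R_glued_j R_in_at
    by simp
  ultimately show ?thesis
    unfolding common_edge_def using L.in_comp_S[OF xL] R.in_comp_glued[OF jR] R_glued_j key_domain_iff
    by metis
qed

lemma common_edge_glued123:
  assumes k: "k < G12.n" and j: "j < G23.n" and i: "G12.in_at k = G23.out_at j"
  shows "common_edge (G12.out_at k \<union> G23.glued j)"
proof -
  have jR: "j < R.n" using j R_n by simp
  have merge23: "G23.merge (G12.in_at k) = G23.glued j" using G23.merge_out_at[OF j] i by simp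
  have merge12: "G12.merge (G23.out_at j) = G12.glued k" using G12.merge_in_at[OF k] i by simp
  have L_glued_k: "L.glued k = G12.out_at k \<union> G23.glued j" using L_glued[OF k] merge23 by simp
  have R_glued_j: "R.glued j = G12.out_at k \<union> G23.glued j"
    using R_glued[OF j] merge12 G12.glued_eq G23.glued_eq i by auto
  have "L.key_second (L.glued k) = key_left (f2 (G12.in_at k), 1, None)"
    using L.key_second_glued[OF k] L_in_at[OF k] G23.key_first_merge[OF G12.in_at_in_S[OF k]]
      key_left_simps by simp
  moreover have "R.key_first (R.glued j) = key_right (f2 (G12.in_at k), 1, None)"
    using R.key_first_glued[OF jR] R_out_at[OF j] G12.key_second_merge[OF G23.out_at_in_F[OF j]] i
      key_right_simps by simp
  moreover have "src L.C (L.glued k) = src R.C (R.glued j)"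
    using L.src_comp_glued[OF k] R.src_comp_glued[OF jR] R_out_at[OF j] merge12 G12.src_comp_glued[OF k]
    by simp
  moreover have "tgt L.C (L.glued k) = tgt R.C (R.glued j)"
    using L.tgt_comp_glued[OF k] L_in_at[OF k] merge23 G23.tgt_comp_glued[OF j] R.tgt_comp_glued[OF jR]
      R_in_at by simp
  ultimately show ?thesis
    unfolding common_edge_def using L.in_comp_glued[OF k] R.in_comp_glued[OF jR] L_glued_k R_glued_j
      key_domain_iff by metis
qed

lemma common_edge_if_triple_edge: "triple_edge x \<Longrightarrow> common_edge x"
  unfolding triple_edge_def
  using common_edge_G1_inner common_edge_G2_inner common_edge_G3_inner common_edge_glued12
    common_edge_glued23 common_edge_glued123 by blast


lemma triple_edge_if_G23_not_input:
  assumes x: "x \<in> edges G23.C" "x \<notin> inputs G23.C" shows "triple_edge x"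
  using x(1)
proof (cases rule: G23.comp_edge_cases)
  case F
  then have "x \<notin> inputs G2" using merge_in_inputs_G23_iff[of x] G23.merge_F_inner x(2) by auto
  then show ?thesis using F unfolding triple_edge_def by blast
next
  case S
  then show ?thesis unfolding triple_edge_def by blast
next
  case (glued j)
  then have "G23.out_at j \<notin> inputs G2"
    using merge_in_inputs_G23_iff[OF G23.out_at_in_F] G23.merge_out_at x(2) by auto
  then show ?thesis using glued unfolding triple_edge_def by blast
qed

lemma triple_edge_if_L:
  assumes x: "x \<in> edges L.C" shows "triple_edge x"
  using x
proof (cases rule: L.comp_edge_cases)
  case F
  then show ?thesis unfolding triple_edge_def by blast
next
  case S
  then show ?thesis using triple_edge_if_G23_not_input by blast
next
  case (glued k)
  then have x: "x = G12.out_at k \<union> G23.merge (G12.in_at k)" using L_glued by simp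
  show ?thesis
  proof (cases "G12.in_at k \<in> outputs G2")
    case True
    define j where "j = G23.out_rank (G12.in_at k)"
    have j: "j < G23.n" "G23.out_at j = G12.in_at k" using G23.out_at_out_rank[OF True] unfolding j_def by auto
    then have "x = G12.out_at k \<union> G23.glued j" using x G23.merge_out_at[OF j(1)] by simp
    then show ?thesis using glued(1) j unfolding triple_edge_def by metis
  next
    case False
    then have "x = G12.glued k" using x G23.merge_F_inner G12.in_at_in_S glued(1) G12.glued_eq
      by simp
    then show ?thesis using glued(1) False unfolding triple_edge_def by blast
  qed
qed

lemma triple_edge_if_G12_not_output:
  assumes x: "x \<in> edges G12.C" "x \<notin> outputs G12.C" shows "triple_edge x"
  using x(1)
proof (cases rule: G12.comp_edge_cases)
  case F
  then show ?thesis unfolding triple_edge_def by blast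
next
  case S
  then have "x \<notin> outputs G2" using merge_in_outputs_G12_iff[of x] G12.merge_S_inner x(2) by auto
  then show ?thesis using S unfolding triple_edge_def by blast
next
  case (glued k)
  then have "G12.in_at k \<notin> outputs G2"
    using merge_in_outputs_G12_iff[OF G12.in_at_in_S] G12.merge_in_at x(2) by auto
  then show ?thesis using glued unfolding triple_edge_def by blast
qed

lemma triple_edge_if_R:
  assumes x: "x \<in> edges R.C" shows "triple_edge x"
  using x
proof (cases rule: R.comp_edge_cases)
  case F
  then show ?thesis using triple_edge_if_G12_not_output by blast
next
  case S
  then show ?thesis unfolding triple_edge_def by blast
next
  case (glued j)
  then have j: "j < G23.n" using R_n by simp
  then have x: "x = G12.merge (G23.out_at j) \<union> G23.in_at j" using glued R_glued by simp
  show ?thesis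
  proof (cases "G23.out_at j \<in> inputs G2")
    case True
    define k where "k = G12.in_rank (G23.out_at j)"
    have k: "k < G12.n" "G12.in_at k = G23.out_at j" using G12.in_at_in_rank[OF True] unfolding k_def by auto
    then have "x = G12.glued k \<union> G23.in_at j" using x G12.merge_in_at[OF k(1)] by simp
    then have "x = G12.out_at k \<union> G23.glued j" using k(2) G12.glued_eq G23.glued_eq by auto
    then show ?thesis using j k unfolding triple_edge_def by metis
  next
    case False
    then have "x = G23.glued j" using x G12.merge_S_inner G23.out_at_in_F j G23.glued_eq by simp
    then show ?thesis using j False unfolding triple_edge_def by blast
  qed
qed

lemma edges_L_R: "edges L.C = edges R.C"
  using triple_edge_if_L triple_edge_if_R common_edge_if_triple_edge unfolding common_edge_def
  by blast

lemma common_edge_L: "x \<in> edges L.C \<Longrightarrow> common_edge x"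
  using triple_edge_if_L common_edge_if_triple_edge by blast

lemma src_tgt_L_R: "x \<in> edges L.C \<Longrightarrow> src L.C x = src R.C x \<and> tgt L.C x = tgt R.C x"
  using common_edge_L unfolding common_edge_def by blast

lemma comp_order_L_R: "L.RC = R.RC"
proof (rule keyed_order_eqI[OF keyed_L])
  show "keyed_order R.RC (edges L.C) R.key_first" using keyed_R edges_L_R by simp
next
  fix x y assume "x \<in> edges L.C" "y \<in> edges L.C"
  then obtain v w where "v \<in> key_domain" "L.key_second x = key_left v" "R.key_first x = key_right v"
    and "w \<in> key_domain" "L.key_second y = key_left w" "R.key_first y = key_right w"
    using common_edge_L unfolding common_edge_def by meson
  then show "L.key_second x < L.key_second y \<longleftrightarrow> R.key_first x < R.key_first y"
    using key_left_less_iff key_right_less_iff by simp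
qed

lemma verts_L_R: "verts L.C = verts R.C"
proof -
  have "sources G2 \<subseteq> verts G2" "sinks G2 \<subseteq> verts G2" unfolding sources_def sinks_def by auto
  then show ?thesis
    unfolding L.verts_comp R.verts_comp G23.verts_comp G12.verts_comp G23.sources_comp G12.sinks_comp
    using verts12 verts23 by blast
qed

end

theorem proposition2p1:
  fixes G1 G2 G3 :: "('v, 'a set) pgraph"
    and R1 R2 R3 :: "('a set \<times> 'a set) set"
  assumes "pop G1 R1" and "pop G2 R2" and "pop G3 R3"
    and "card (outputs G1) = card (inputs G2)"
    and "card (outputs G2) = card (inputs G3)"
    and "disjoint_names G1" and "disjoint_names G2" and "disjoint_names G3"
    and "\<Union>(edges G1) \<inter> \<Union>(edges G2) = {}"
    and "\<Union>(edges G1) \<inter> \<Union>(edges G3) = {}"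
    and "\<Union>(edges G2) \<inter> \<Union>(edges G3) = {}"
    and "verts G1 \<inter> verts G2 = {}"
    and "verts G1 \<inter> verts G3 = {}"
    and "verts G2 \<inter> verts G3 = {}"
  shows "let L = comp_graph (comp_graph G3 R3 G2 R2) (comp_order G3 R3 G2 R2) G1 R1;
             R = comp_graph G3 R3 (comp_graph G2 R2 G1 R1) (comp_order G2 R2 G1 R1)
         in verts L = verts R \<and> edges L = edges R \<and>
            (\<forall>e \<in> edges L. src L e = src R e \<and> tgt L e = tgt R e) \<and>
            comp_order (comp_graph G3 R3 G2 R2) (comp_order G3 R3 G2 R2) G1 R1
            = comp_order G3 R3 (comp_graph G2 R2 G1 R1) (comp_order G2 R2 G1 R1)"
proof -
  interpret pop_triple G1 G2 G3 R1 R2 R3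
    using assms by unfold_locales
  show ?thesis
    unfolding Let_def using verts_L_R edges_L_R src_tgt_L_R comp_order_L_R by blast
qed

end
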